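(* Let $T>0$ and let $G:\mathbb{R}^n\leadsto\mathbb{R}^n$ be a Lipschitz continuous (in the Hausdorff distance) set-valued map with nonempty, convex, compact values. Then an initial function $g_0\in C(\mathbb{R}^n,\mathbb{R})$ is reconstructible if and only if there exists a function $g\in C(\mathbb{R}^n,\mathbb{R})$ such that $g_0=V(0,\cdot)$, where $V$ is the value function of the inverse Mayer problem with terminal function $g$, i.e. $V(t_0,x_0)=\sup\{g(x(T))\mid x\in\mathrm{Sol}_G(t_0,x_0)\}$.
   Context: $\mathrm{Sol}_G(t_0,x_0)$ denotes the set of absolutely continuous $x:[0,T]\to\mathbb{R}^n$ with $\dot x(t)\in G(x(t))$ for a.e. $t\in[0,T]$ and $x(t_0)=x_0$. For $g_0\in C(\mathbb{R}^n,\mathbb{R})$, the Mayer value function is $U(t_0,x_0)=\inf\{g_0(x(0))\mid x\in\mathrm{Sol}_G(t_0,x_0)\}$; with $g_T=U(T,\cdot)$, the inverse Mayer value function is $W(t_0,x_0)=\sup\{g_T(x(T))\mid x\in\mathrm{Sol}_G(t_0,x_0)\}$. The function $g_0$ is reconstructible (in time $T$) if $g_0=W(0,\cdot)$. (Equivalently, $U$ and $W$ are the forward viscosity solution with $U(0,\cdot)=g_0$ and the backward viscosity solution with $W(T,\cdot)=U(T,\cdot)$ of $\nabla_tu+H(x,\nabla_xu)=0$ with $H(x,p)=\sup\{\langle v,p\rangle\mid v\in G(x)\}$.) *)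

theory Defs
  imports "HOL-Analysis.Analysis"
begin

definition hausdist :: "'a::metric_space set \<Rightarrow> 'a set \<Rightarrow> real" where
  "hausdist A B = max (SUP a\<in>A. infdist a B) (SUP b\<in>B. infdist b A)"

definition abs_cont_on :: "real \<Rightarrow> real \<Rightarrow> (real \<Rightarrow> 'a::real_normed_vector) \<Rightarrow> bool" where
  "abs_cont_on s t f \<longleftrightarrow>
     (\<forall>e>0. \<exists>d>0. \<forall>(n::nat) (a::nat \<Rightarrow> real) (b::nat \<Rightarrow> real).
        (\<forall>i<n. s \<le> a i \<and> a i \<le> b i \<and> b i \<le> t) \<and>
        (\<forall>i<n. \<forall>j<n. i \<noteq> j \<longrightarrow> b i \<le> a j \<or> b j \<le> a i) \<and>
        (\<Sum>i<n. b i - a i) < d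
        \<longrightarrow> (\<Sum>i<n. norm (f (b i) - f (a i))) < e)"

definition Sol :: "('a::euclidean_space \<Rightarrow> 'a set) \<Rightarrow> real \<Rightarrow> real \<Rightarrow> 'a \<Rightarrow> (real \<Rightarrow> 'a) set" where
  "Sol G T t0 x0 = {x. abs_cont_on 0 T x \<and>
      (\<exists>N. N \<in> null_sets lebesgue \<and>
         (\<forall>t\<in>{0..T} - N. \<exists>v. (x has_vector_derivative v) (at t within {0..T}) \<and> v \<in> G (x t))) \<and>
      x t0 = x0}"

definition mayer_value :: "('a::euclidean_space \<Rightarrow> 'a set) \<Rightarrow> real \<Rightarrow> ('a \<Rightarrow> real) \<Rightarrow> real \<Rightarrow> 'a \<Rightarrow> real" where
  "mayer_value G T g0 t0 x0 = Inf {g0 (x 0) | x. x \<in> Sol G T t0 x0}"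

definition inv_mayer_value :: "('a::euclidean_space \<Rightarrow> 'a set) \<Rightarrow> real \<Rightarrow> ('a \<Rightarrow> real) \<Rightarrow> real \<Rightarrow> 'a \<Rightarrow> real" where
  "inv_mayer_value G T g t0 x0 = Sup {g (x T) | x. x \<in> Sol G T t0 x0}"

definition reconstructible :: "('a::euclidean_space \<Rightarrow> 'a set) \<Rightarrow> real \<Rightarrow> ('a \<Rightarrow> real) \<Rightarrow> bool" where
  "reconstructible G T g0 \<longleftrightarrow>
     g0 = inv_mayer_value G T (mayer_value G T g0 T) 0"

end

theory Submission
  imports Defs
begin

(*
  If g0 is reconstructible, then g = U(T,.) is a continuous terminal cost with g0 = V(0,.); the
  hypotheses on G are needed to see that U(T,.) is continuous.  By Filippov's theorem a solution
  eta ending at y can be replaced by a solution ending at any y' that starts within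
  exp(2LT) (|y' - y| + eps) of eta(0); since G has linear growth, the solutions ending near y start
  in a fixed ball, on which g0 is uniformly continuous.

  Conversely, let g0 = V(0,.) with g continuous.  For every solution xi starting at x,
  g(xi(T)) <= U(T, xi(T)) <= g0(x): the upper bound is witnessed by xi itself, and the lower bound
  holds because every solution eta ending at xi(T) has g0(eta(0)) = V(0, eta(0)) >= g(xi(T)).
  Taking suprema over xi gives W(0,x) = g0(x).

  Filippov's theorem is proved backwards on a fine uniform partition of [0,T].  On each piece
  [a,b] the chord slope u of eta is an almost admissible velocity along the chord, and the
  successive projections v_0 = u, v_(k+1)(t) = closest point to v_k(t) in G(z - int_t^b v_k)
  converge uniformly, because L (b - a) <= 1/2, to the velocity of an exact solution ending at z.
  Each piece enlarges the initial error by at most the factor 1 + 2 L (b - a).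
*)

section \<open>Absolutely continuous functions\<close>

lemma abs_cont_on_subinterval:
  assumes "abs_cont_on a b f" "a \<le> c" "d \<le> b"
  shows "abs_cont_on c d f"
  using assms unfolding abs_cont_on_def by (smt (verit, del_insts))

lemma lipschitz_on_imp_abs_cont_on:
  fixes f :: "real \<Rightarrow> 'a::real_normed_vector"
  assumes "M-lipschitz_on {a..b} f"
  shows "abs_cont_on a b f"
  unfolding abs_cont_on_def
proof (intro allI impI)
  fix e :: real assume "e > 0"
  have M: "norm (f t - f s) \<le> M * (t - s)" if "a \<le> s" "s \<le> t" "t \<le> b" for s t
    using lipschitz_onD[OF assms, of t s] that by (simp add: dist_norm dist_real_def)
  have "0 \<le> M" using assms lipschitz_on_nonneg by blast
  show "\<exists>d>0. \<forall>(n::nat) l r.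
        (\<forall>i<n. a \<le> l i \<and> l i \<le> r i \<and> r i \<le> b) \<and>
        (\<forall>i<n. \<forall>j<n. i \<noteq> j \<longrightarrow> r i \<le> l j \<or> r j \<le> l i) \<and>
        (\<Sum>i<n. r i - l i) < d \<longrightarrow> (\<Sum>i<n. norm (f (r i) - f (l i))) < e"
  proof (intro exI[of _ "e / (M + 1)"] conjI allI impI)
    show "e / (M + 1) > 0" using \<open>e > 0\<close> \<open>0 \<le> M\<close> by simp
    fix n :: nat and l r :: "nat \<Rightarrow> real"
    assume lr: "(\<forall>i<n. a \<le> l i \<and> l i \<le> r i \<and> r i \<le> b) \<and>
        (\<forall>i<n. \<forall>j<n. i \<noteq> j \<longrightarrow> r i \<le> l j \<or> r j \<le> l i) \<and> (\<Sum>i<n. r i - l i) < e / (M + 1)"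
    have "(\<Sum>i<n. norm (f (r i) - f (l i))) \<le> (\<Sum>i<n. (M + 1) * (r i - l i))"
      using lr M by (intro sum_mono) (smt (verit, best) lessThan_iff mult_right_mono)
    also have "\<dots> = (M + 1) * (\<Sum>i<n. r i - l i)" by (simp add: sum_distrib_left)
    also have "\<dots> < e" using lr \<open>0 \<le> M\<close> by (simp add: field_simps)
    finally show "(\<Sum>i<n. norm (f (r i) - f (l i))) < e" .
  qed
qed

definition nonoverlapping_intervals :: "'i set \<Rightarrow> ('i \<Rightarrow> real) \<Rightarrow> ('i \<Rightarrow> real) \<Rightarrow> bool" where
  "nonoverlapping_intervals I l r \<longleftrightarrow> finite I \<and> (\<forall>i\<in>I. l i \<le> r i) \<and>
     (\<forall>i\<in>I. \<forall>j\<in>I. i \<noteq> j \<longrightarrow> r i \<le> l j \<or> r j \<le> l i)"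

lemma abs_cont_onE:
  assumes "abs_cont_on a b f" "e > 0"
  obtains d where "d > 0"
    "\<And>I l r. nonoverlapping_intervals I l r \<Longrightarrow> (\<And>i. i \<in> I \<Longrightarrow> a \<le> l i \<and> r i \<le> b) \<Longrightarrow>
       (\<Sum>i\<in>I. r i - l i) < d \<Longrightarrow> (\<Sum>i\<in>I. norm (f (r i) - f (l i))) < e"
proof -
  obtain d where "d > 0" and d: "\<forall>(n::nat) l r.
        (\<forall>i<n. a \<le> l i \<and> l i \<le> r i \<and> r i \<le> b) \<and>
        (\<forall>i<n. \<forall>j<n. i \<noteq> j \<longrightarrow> r i \<le> l j \<or> r j \<le> l i) \<and>
        (\<Sum>i<n. r i - l i) < d \<longrightarrow> (\<Sum>i<n. norm (f (r i) - f (l i))) < e"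
    using assms unfolding abs_cont_on_def by blast
  have "(\<Sum>i\<in>I. norm (f (r i) - f (l i))) < e"
    if I: "nonoverlapping_intervals I l r" "\<And>i. i \<in> I \<Longrightarrow> a \<le> l i \<and> r i \<le> b"
      "(\<Sum>i\<in>I. r i - l i) < d" for I and l r :: "'i \<Rightarrow> real"
  proof -
    obtain g where g: "bij_betw g {..<card I} I"
      using ex_bij_betw_nat_finite[of I] I(1) by (auto simp: nonoverlapping_intervals_def lessThan_atLeast0)
    have sum_g: "(\<Sum>i<card I. h (g i)) = (\<Sum>i\<in>I. h i)" for h :: "'i \<Rightarrow> real"
      by (rule sum.reindex_bij_betw[OF g])
    have gI: "g i \<in> I" if "i < card I" for i
      using bij_betwE[OF g] that by blast
    have "g i \<noteq> g j" if "i < card I" "j < card I" "i \<noteq> j" for i j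
      using g that by (auto simp: bij_betw_def inj_on_def)
    with I gI have "(\<Sum>i<card I. norm (f (r (g i)) - f (l (g i)))) < e"
      using d[rule_format, of "card I" "l \<circ> g" "r \<circ> g"]
      by (auto simp: sum_g[of "\<lambda>i. r i - l i"] nonoverlapping_intervals_def)
    then show ?thesis by (simp add: sum_g[of "\<lambda>i. norm (f (r i) - f (l i))"])
  qed
  then show thesis using that \<open>d > 0\<close> by blast
qed

lemma abs_cont_on_imp_continuous_on:
  assumes "abs_cont_on a b f"
  shows "continuous_on {a..b} f"
  unfolding continuous_on_iff
proof (intro ballI allI impI)
  fix x e :: real assume x: "x \<in> {a..b}" and "e > 0"
  obtain d where "d > 0" and d: "\<And>(I :: unit set) l r. nonoverlapping_intervals I l r \<Longrightarrow>
      (\<And>i. i \<in> I \<Longrightarrow> a \<le> l i \<and> r i \<le> b) \<Longrightarrow>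
      (\<Sum>i\<in>I. r i - l i) < d \<Longrightarrow> (\<Sum>i\<in>I. norm (f (r i) - f (l i))) < e"
    using abs_cont_onE[OF assms \<open>e > 0\<close>] by blast
  have "dist (f y) (f x) < e" if "y \<in> {a..b}" "dist y x < d" for y
    using d[of "{()}" "\<lambda>_. min x y" "\<lambda>_. max x y"] x that
    by (cases "x \<le> y") (auto simp: nonoverlapping_intervals_def dist_norm norm_minus_commute dist_real_def)
  then show "\<exists>d>0. \<forall>y\<in>{a..b}. dist y x < d \<longrightarrow> dist (f y) (f x) < e"
    using \<open>d > 0\<close> by blast
qed

lemma sum_lengths_le_measure:
  assumes I: "nonoverlapping_intervals I l r" and sub: "\<And>i. i \<in> I \<Longrightarrow> {l i..r i} \<subseteq> U"
    and U: "U \<in> lmeasurable"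
  shows "(\<Sum>i\<in>I. r i - l i) \<le> measure lebesgue U"
proof -
  have fin: "finite I" and lr: "\<And>i. i \<in> I \<Longrightarrow> l i \<le> r i"
    using I by (auto simp: nonoverlapping_intervals_def)
  have "pairwise (\<lambda>i j. negligible ({l i..r i} \<inter> {l j..r j})) I"
  proof (rule pairwiseI)
    fix i j assume "i \<in> I" "j \<in> I" "i \<noteq> j"
    then have "r i \<le> l j \<or> r j \<le> l i"
      using I by (auto simp: nonoverlapping_intervals_def)
    then have "{l i..r i} \<inter> {l j..r j} \<subseteq> {r i, r j}"
      by auto
    then show "negligible ({l i..r i} \<inter> {l j..r j})"
      by (rule negligible_subset[rotated]) simp
  qed
  then have "measure lebesgue (\<Union>i\<in>I. {l i..r i}) = (\<Sum>i\<in>I. r i - l i)"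
    using measure_negligible_finite_Union_image[OF fin, of "\<lambda>i. {l i..r i}"] lr by simp
  moreover have "measure lebesgue (\<Union>i\<in>I. {l i..r i}) \<le> measure lebesgue U"
    using sub fin by (intro measure_mono_fmeasurable[OF _ _ U]) auto
  ultimately show ?thesis by simp
qed

lemma negligible_outer_open:
  assumes "negligible N" "e > 0"
  obtains U where "open U" "N \<subseteq> U" "U \<in> lmeasurable" "measure lebesgue U < e"
proof -
  obtain U where U: "open U" "N \<subseteq> U" "U - N \<in> lmeasurable" "emeasure lebesgue (U - N) < ennreal e"
    using sets_lebesgue_outer_open[OF negligible_imp_sets[OF assms(1)] assms(2)] by blast
  have neg: "negligible ((U - N) - U \<union> (U - (U - N)))"
    by (rule negligible_subset[OF assms(1)]) auto
  have "measure lebesgue U = measure lebesgue (U - N)"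
    by (rule measure_negligible_symdiff[OF U(3) neg])
  also have "\<dots> < e"
    using U(3,4) assms(2) by (simp add: emeasure_eq_measure2 ennreal_less_iff)
  finally show thesis
    using that U(1,2) lmeasurable_negligible_symdiff[OF U(3) neg] by blast
qed

lemma tagged_division_of_real_elem:
  assumes "p tagged_division_of {a..b::real}" "(x, K) \<in> p"
  shows "K = {Inf K..Sup K}" "a \<le> Inf K" "Inf K \<le> x" "x \<le> Sup K" "Sup K \<le> b"
proof -
  obtain u v where K: "K = {u..v}" using tagged_division_ofD(4)[OF assms] by auto
  have "x \<in> K" "K \<subseteq> {a..b}" using tagged_division_ofD(2,3)[OF assms] by auto
  then show "K = {Inf K..Sup K}" "a \<le> Inf K" "Inf K \<le> x" "x \<le> Sup K" "Sup K \<le> b"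
    using K by auto
qed

lemma tagged_division_nonoverlapping:
  assumes p: "p tagged_division_of {a..b::real}" and Q: "Q \<subseteq> {(x, K) \<in> p. Inf K < Sup K}"
  shows "nonoverlapping_intervals Q (\<lambda>(x, K). Inf K) (\<lambda>(x, K). Sup K)"
  unfolding nonoverlapping_intervals_def
proof (intro conjI ballI impI)
  show "finite Q" using Q finite_subset[OF _ tagged_division_ofD(1)[OF p]] by blast
next
  fix xK assume "xK \<in> Q"
  then show "(case xK of (x, K) \<Rightarrow> Inf K) \<le> (case xK of (x, K) \<Rightarrow> Sup K)" using Q by auto
next
  fix xK yL assume xK: "xK \<in> Q" and yL: "yL \<in> Q" and ne: "xK \<noteq> yL"
  obtain x K y L' where eq: "xK = (x, K)" "yL = (y, L')" by fastforce
  have inp: "(x, K) \<in> p" "(y, L') \<in> p" and lt: "Inf K < Sup K" "Inf L' < Sup L'"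
    using xK yL Q eq by auto
  have "interior K \<inter> interior L' = {}"
    using tagged_division_ofD(5)[OF p inp] ne eq by simp
  then have "{Inf K<..<Sup K} \<inter> {Inf L'<..<Sup L'} = {}"
    using tagged_division_of_real_elem(1)[OF p inp(1)] tagged_division_of_real_elem(1)[OF p inp(2)]
    by (metis interior_atLeastAtMost_real)
  then have "Sup K \<le> Inf L' \<or> Sup L' \<le> Inf K"
  proof (rule contrapos_pp)
    assume "\<not> (Sup K \<le> Inf L' \<or> Sup L' \<le> Inf K)"
    then have "(max (Inf K) (Inf L') + min (Sup K) (Sup L')) / 2 \<in> {Inf K<..<Sup K} \<inter> {Inf L'<..<Sup L'}"
      using lt by auto
    then show "{Inf K<..<Sup K} \<inter> {Inf L'<..<Sup L'} \<noteq> {}" by blast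
  qed
  then show "(case xK of (x, K) \<Rightarrow> Sup K) \<le> (case yL of (x, K) \<Rightarrow> Inf K) \<or>
             (case yL of (x, K) \<Rightarrow> Sup K) \<le> (case xK of (x, K) \<Rightarrow> Inf K)"
    using eq by simp
qed

lemma inner_diff_le_of_linear_approx:
  fixes f :: "real \<Rightarrow> 'a::real_inner"
  assumes "u \<le> x" "x \<le> v" "u \<in> S" "v \<in> S" "\<bar>u - x\<bar> < r" "\<bar>v - x\<bar> < r" "w \<bullet> n \<le> \<beta>"
    and approx: "\<forall>s\<in>S. \<bar>s - x\<bar> < r \<longrightarrow> norm (f s - f x - (s - x) *\<^sub>R w) \<le> e * \<bar>s - x\<bar>"
  shows "(f v - f u) \<bullet> n \<le> (\<beta> + e * norm n) * (v - u)"
proof -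
  define A where "A = f v - f x - (v - x) *\<^sub>R w"
  define B where "B = f u - f x - (u - x) *\<^sub>R w"
  have "norm A \<le> e * (v - x)" "norm B \<le> e * (x - u)"
    using approx assms(1-6) by (auto simp: A_def B_def)
  have "(f v - f u) \<bullet> n = A \<bullet> n - B \<bullet> n + (v - u) * (w \<bullet> n)"
    by (simp add: A_def B_def algebra_simps inner_diff_left inner_add_left)
  also have "\<dots> \<le> norm A * norm n + norm B * norm n + (v - u) * \<beta>"
    using norm_cauchy_schwarz[of A n] norm_cauchy_schwarz[of "-B" n]
      mult_left_mono[OF assms(7), of "v - u"] assms(1,2)
    by simp
  also have "\<dots> \<le> e * (v - x) * norm n + e * (x - u) * norm n + (v - u) * \<beta>"
    using mult_right_mono[OF \<open>norm A \<le> e * (v - x)\<close>, of "norm n"]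
      mult_right_mono[OF \<open>norm B \<le> e * (x - u)\<close>, of "norm n"]
    by simp
  also have "\<dots> = (\<beta> + e * norm n) * (v - u)" by (simp add: algebra_simps)
  finally show ?thesis .
qed

lemma derivative_gauge:
  fixes f :: "real \<Rightarrow> 'a::euclidean_space"
  assumes "open U" "N \<subseteq> U" "e > 0"
    and der: "\<And>t. t \<in> {a..b} - N \<Longrightarrow> \<exists>v. (f has_vector_derivative v) (at t within {a..b}) \<and> v \<bullet> n \<le> \<beta>"
  obtains \<rho> where "\<And>t. \<rho> t > 0" "\<And>t. t \<in> N \<Longrightarrow> ball t (\<rho> t) \<subseteq> U"
    "\<And>t. t \<in> {a..b} - N \<Longrightarrow> \<exists>w. w \<bullet> n \<le> \<beta> \<and>
       (\<forall>s\<in>{a..b}. \<bar>s - t\<bar> < \<rho> t \<longrightarrow> norm (f s - f t - (s - t) *\<^sub>R w) \<le> e * \<bar>s - t\<bar>)"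
proof -
  have "\<exists>\<rho>>0. (t \<in> N \<longrightarrow> ball t \<rho> \<subseteq> U) \<and> (t \<in> {a..b} - N \<longrightarrow> (\<exists>w. w \<bullet> n \<le> \<beta> \<and>
      (\<forall>s\<in>{a..b}. \<bar>s - t\<bar> < \<rho> \<longrightarrow> norm (f s - f t - (s - t) *\<^sub>R w) \<le> e * \<bar>s - t\<bar>)))" for t
  proof (cases "t \<in> {a..b} - N")
    case True
    then obtain w where w: "(f has_vector_derivative w) (at t within {a..b})" "w \<bullet> n \<le> \<beta>"
      using der by blast
    then obtain \<rho> where "\<rho> > 0" "\<forall>s\<in>{a..b}. norm (s - t) < \<rho> \<longrightarrow>
        norm (f s - f t - (s - t) *\<^sub>R w) \<le> e * norm (s - t)"
      unfolding has_vector_derivative_def has_derivative_within_alt using \<open>e > 0\<close> by blast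
    then show ?thesis using True w by auto
  next
    case False
    then show ?thesis
      using assms(1,2) open_contains_ball[of U] by (cases "t \<in> N") (auto intro: exI[of _ 1])
  qed
  then show thesis using that by metis
qed

lemma tagged_division_inner_jump_le:
  fixes f :: "real \<Rightarrow> 'a::euclidean_space"
  assumes p: "p tagged_division_of {a..b}" and "a \<le> b" "Q \<subseteq> p" "e \<ge> 0"
    and good: "\<And>x K. (x, K) \<in> p - Q \<Longrightarrow>
      (f (Sup K) - f (Inf K)) \<bullet> n - \<beta> * (Sup K - Inf K) \<le> e * norm n * (Sup K - Inf K)"
    and jumps: "(\<Sum>(x, K)\<in>Q. norm (f (Sup K) - f (Inf K))) \<le> e"
    and lengths: "(\<Sum>(x, K)\<in>Q. Sup K - Inf K) \<le> e"
  shows "(f b - f a) \<bullet> n - \<beta> * (b - a) \<le> e * (norm n * (b - a) + norm n + \<bar>\<beta>\<bar>)"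
proof -
  define len where "len K = Sup K - Inf K" for K :: "real set"
  define jump where "jump K = f (Sup K) - f (Inf K)" for K :: "real set"
  note elem = tagged_division_of_real_elem[OF p]
  have fin: "finite p" using p by blast
  have len_nonneg: "0 \<le> len K" if "(x, K) \<in> p" for x K
    using elem(3,4)[OF that] by (simp add: len_def)
  have jump_sum: "(\<Sum>(x, K)\<in>p. jump K) = f b - f a"
    using additive_tagged_division_1[OF \<open>a \<le> b\<close> p, of f] by (simp add: jump_def split_beta)
  have len_sum: "(\<Sum>(x, K)\<in>p. len K) = b - a"
    using additive_tagged_division_1[OF \<open>a \<le> b\<close> p, of "\<lambda>t. t"] by (simp add: len_def split_beta)
  have bad: "jump K \<bullet> n - \<beta> * len K \<le> norm n * norm (jump K) + \<bar>\<beta>\<bar> * len K" if "(x, K) \<in> Q" for x K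
  proof -
    have "- \<beta> * len K \<le> \<bar>\<beta>\<bar> * len K"
      using len_nonneg[of x K] that \<open>Q \<subseteq> p\<close> by (intro mult_right_mono) auto
    moreover have "jump K \<bullet> n \<le> norm n * norm (jump K)"
      using norm_cauchy_schwarz[of "jump K" n] by (simp add: mult.commute)
    ultimately show ?thesis by linarith
  qed
  have "(f b - f a) \<bullet> n - \<beta> * (b - a) = (\<Sum>(x, K)\<in>p. jump K \<bullet> n - \<beta> * len K)"
    unfolding jump_sum[symmetric] len_sum[symmetric]
    by (simp add: split_beta sum_subtractf inner_sum_left sum_distrib_left)
  also have "\<dots> = (\<Sum>(x, K)\<in>p - Q. jump K \<bullet> n - \<beta> * len K) + (\<Sum>(x, K)\<in>Q. jump K \<bullet> n - \<beta> * len K)"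
    by (rule sum.subset_diff[OF \<open>Q \<subseteq> p\<close> fin])
  also have "\<dots> \<le> (\<Sum>(x, K)\<in>p - Q. e * norm n * len K) + (\<Sum>(x, K)\<in>Q. norm n * norm (jump K) + \<bar>\<beta>\<bar> * len K)"
    using good bad by (intro add_mono sum_mono) (auto simp: jump_def len_def)
  also have "\<dots> \<le> e * norm n * (b - a) + (norm n * e + \<bar>\<beta>\<bar> * e)"
  proof (intro add_mono)
    have "(\<Sum>(x, K)\<in>p - Q. len K) \<le> (\<Sum>(x, K)\<in>p. len K)"
      using len_nonneg fin by (intro sum_mono2) auto
    then show "(\<Sum>(x, K)\<in>p - Q. e * norm n * len K) \<le> e * norm n * (b - a)"
      using \<open>e \<ge> 0\<close> len_sum by (simp add: sum_distrib_left[symmetric] split_beta mult_left_mono)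
    show "(\<Sum>(x, K)\<in>Q. norm n * norm (jump K) + \<bar>\<beta>\<bar> * len K) \<le> norm n * e + \<bar>\<beta>\<bar> * e"
      using mult_left_mono[OF jumps, of "norm n"] mult_left_mono[OF lengths, of "\<bar>\<beta>\<bar>"]
      by (simp add: sum.distrib sum_distrib_left split_beta jump_def len_def)
  qed
  finally show ?thesis by (simp add: algebra_simps)
qed

lemma fine_tag_inner_jump_le:
  fixes f :: "real \<Rightarrow> 'a::euclidean_space"
  assumes p: "p tagged_division_of {a..b}" and fine: "(\<lambda>t. ball t (\<rho> t)) fine p" and "(x, K) \<in> p"
    and "w \<bullet> n \<le> \<beta>"
    and approx: "\<forall>s\<in>{a..b}. \<bar>s - x\<bar> < \<rho> x \<longrightarrow> norm (f s - f x - (s - x) *\<^sub>R w) \<le> e * \<bar>s - x\<bar>"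
  shows "(f (Sup K) - f (Inf K)) \<bullet> n - \<beta> * (Sup K - Inf K) \<le> e * norm n * (Sup K - Inf K)"
proof -
  note elem = tagged_division_of_real_elem[OF p \<open>(x, K) \<in> p\<close>]
  have "Inf K \<in> K" "Sup K \<in> K" "K \<subseteq> ball x (\<rho> x)"
    using elem \<open>(x, K) \<in> p\<close> fine by (auto simp: fine_def)
  then have "(f (Sup K) - f (Inf K)) \<bullet> n \<le> (\<beta> + e * norm n) * (Sup K - Inf K)"
    using elem \<open>w \<bullet> n \<le> \<beta>\<close> approx
    by (intro inner_diff_le_of_linear_approx[of _ x _ "{a..b}" "\<rho> x" w])
      (auto simp: dist_real_def subset_iff)
  then show ?thesis by (simp add: algebra_simps)
qed

text \<open>Cousin's lemma with a gauge that controls the derivative off the null set N and keeps the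
  tags in N inside a small open cover of N, where absolute continuity takes over.\<close>
lemma abs_cont_on_inner_diff_le_approx:
  fixes f :: "real \<Rightarrow> 'a::euclidean_space"
  assumes ac: "abs_cont_on a b f" and "a \<le> b" and N: "negligible N" and "e > 0"
    and der: "\<And>t. t \<in> {a..b} - N \<Longrightarrow> \<exists>v. (f has_vector_derivative v) (at t within {a..b}) \<and> v \<bullet> n \<le> \<beta>"
  shows "(f b - f a) \<bullet> n - \<beta> * (b - a) \<le> e * (norm n * (b - a) + norm n + \<bar>\<beta>\<bar>)"
proof -
  obtain d where "d > 0" and d: "\<And>(I :: (real \<times> real set) set) l r. nonoverlapping_intervals I l r \<Longrightarrow>
      (\<And>i. i \<in> I \<Longrightarrow> a \<le> l i \<and> r i \<le> b) \<Longrightarrow>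
      (\<Sum>i\<in>I. r i - l i) < d \<Longrightarrow> (\<Sum>i\<in>I. norm (f (r i) - f (l i))) < e"
    using abs_cont_onE[OF ac \<open>e > 0\<close>] by blast
  obtain U where U: "open U" "N \<subseteq> U" "U \<in> lmeasurable" "measure lebesgue U < min d e"
    using negligible_outer_open[OF N, of "min d e"] \<open>d > 0\<close> \<open>e > 0\<close> by auto
  obtain \<rho> where \<rho>: "\<And>t. \<rho> t > 0" "\<And>t. t \<in> N \<Longrightarrow> ball t (\<rho> t) \<subseteq> U"
    "\<And>t. t \<in> {a..b} - N \<Longrightarrow> \<exists>w. w \<bullet> n \<le> \<beta> \<and>
      (\<forall>s\<in>{a..b}. \<bar>s - t\<bar> < \<rho> t \<longrightarrow> norm (f s - f t - (s - t) *\<^sub>R w) \<le> e * \<bar>s - t\<bar>)"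
    using derivative_gauge[OF U(1,2) \<open>e > 0\<close> der] by blast
  obtain p where p: "p tagged_division_of {a..b}" and fine: "(\<lambda>t. ball t (\<rho> t)) fine p"
    using fine_division_exists_real[OF gauge_ball_dependent] \<rho>(1) by blast
  note elem = tagged_division_of_real_elem[OF p]
  define Q where "Q = {(x, K) \<in> p. x \<in> N \<and> Inf K < Sup K}"
  have "Q \<subseteq> p" by (auto simp: Q_def)
  have nonov: "nonoverlapping_intervals Q (\<lambda>(x, K). Inf K) (\<lambda>(x, K). Sup K)"
    by (rule tagged_division_nonoverlapping[OF p]) (auto simp: Q_def)
  have "{Inf (snd xK)..Sup (snd xK)} \<subseteq> U" if "xK \<in> Q" for xK
  proof -
    obtain x K where xK: "xK = (x, K)" by fastforce
    then have "K \<subseteq> ball x (\<rho> x)" "x \<in> N" "K = {Inf K..Sup K}"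
      using that fine elem(1) by (auto simp: Q_def fine_def)
    then show ?thesis using \<rho>(2) xK by auto
  qed
  then have "(\<Sum>(x, K)\<in>Q. Sup K - Inf K) \<le> measure lebesgue U"
    using sum_lengths_le_measure[OF nonov _ U(3)] by (simp add: split_beta)
  then have lengths: "(\<Sum>(x, K)\<in>Q. Sup K - Inf K) < d" "(\<Sum>(x, K)\<in>Q. Sup K - Inf K) < e"
    using U(4) by simp_all
  then have jumps: "(\<Sum>(x, K)\<in>Q. norm (f (Sup K) - f (Inf K))) < e"
    using d[OF nonov] elem \<open>Q \<subseteq> p\<close> by (fastforce simp: split_beta)
  have "(f (Sup K) - f (Inf K)) \<bullet> n - \<beta> * (Sup K - Inf K) \<le> e * norm n * (Sup K - Inf K)"
    if "(x, K) \<in> p - Q" for x K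
  proof (cases "x \<in> N")
    case True
    then have "Sup K = Inf K" using that elem(3,4)[of x K] by (auto simp: Q_def)
    then show ?thesis by simp
  next
    case False
    then have "x \<in> {a..b} - N" using that elem[of x K] by auto
    then show ?thesis
      using \<rho>(3) fine_tag_inner_jump_le[OF p fine] that by blast
  qed
  then show ?thesis
    using jumps lengths \<open>e > 0\<close> by (intro tagged_division_inner_jump_le[OF p \<open>a \<le> b\<close> \<open>Q \<subseteq> p\<close>]) auto
qed

lemma abs_cont_on_inner_diff_le:
  fixes f :: "real \<Rightarrow> 'a::euclidean_space"
  assumes ac: "abs_cont_on a b f" and "a \<le> b" and N: "negligible N"
    and der: "\<And>t. t \<in> {a..b} - N \<Longrightarrow> \<exists>v. (f has_vector_derivative v) (at t within {a..b}) \<and> v \<bullet> n \<le> \<beta>"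
  shows "(f b - f a) \<bullet> n \<le> \<beta> * (b - a)"
proof (rule field_le_epsilon)
  define C where "C = norm n * (b - a) + norm n + \<bar>\<beta>\<bar>"
  have "C \<ge> 0" using \<open>a \<le> b\<close> by (simp add: C_def)
  fix e :: real assume "e > 0"
  have "(f b - f a) \<bullet> n - \<beta> * (b - a) \<le> e / (C + 1) * C"
    using abs_cont_on_inner_diff_le_approx[OF assms(1-3) _ der, of "e / (C + 1)"] \<open>C \<ge> 0\<close> \<open>e > 0\<close>
    by (simp add: C_def)
  also have "\<dots> \<le> e" using \<open>C \<ge> 0\<close> \<open>e > 0\<close> by (simp add: field_simps)
  finally show "(f b - f a) \<bullet> n \<le> \<beta> * (b - a) + e" by simp
qed

lemma abs_cont_on_norm_diff_le:
  fixes f :: "real \<Rightarrow> 'a::euclidean_space"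
  assumes ac: "abs_cont_on a b f" and "a \<le> b" "negligible N" "B \<ge> 0"
    and der: "\<And>t. t \<in> {a..b} - N \<Longrightarrow> \<exists>v. (f has_vector_derivative v) (at t within {a..b}) \<and> norm v \<le> B"
  shows "norm (f b - f a) \<le> B * (b - a)"
proof (cases "f b = f a")
  case True
  then show ?thesis using assms by simp
next
  case False
  define n where "n = (1 / norm (f b - f a)) *\<^sub>R (f b - f a)"
  have "(f b - f a) \<bullet> n \<le> B * (b - a)"
  proof (rule abs_cont_on_inner_diff_le[OF ac \<open>a \<le> b\<close> \<open>negligible N\<close>])
    fix t assume "t \<in> {a..b} - N"
    then obtain v where v: "(f has_vector_derivative v) (at t within {a..b})" "norm v \<le> B"
      using der by blast
    moreover have "v \<bullet> n \<le> norm v" 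
      using norm_cauchy_schwarz[of v n] False by (simp add: n_def)
    ultimately show "\<exists>v. (f has_vector_derivative v) (at t within {a..b}) \<and> v \<bullet> n \<le> B"
      by force
  qed
  moreover have "(f b - f a) \<bullet> n = norm (f b - f a)"
    using False by (simp add: n_def power2_norm_eq_inner[symmetric] power2_eq_square)
  ultimately show ?thesis by simp
qed

lemma abs_cont_on_slope_mem:
  fixes f :: "real \<Rightarrow> 'a::euclidean_space"
  assumes ac: "abs_cont_on a b f" and "a < b" "negligible N" "convex C" "closed C"
    and der: "\<And>t. t \<in> {a..b} - N \<Longrightarrow> \<exists>v. (f has_vector_derivative v) (at t within {a..b}) \<and> v \<in> C"
  shows "(1 / (b - a)) *\<^sub>R (f b - f a) \<in> C"
proof (rule ccontr)
  assume "(1 / (b - a)) *\<^sub>R (f b - f a) \<notin> C"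
  then obtain c \<beta> where c: "c \<bullet> ((1 / (b - a)) *\<^sub>R (f b - f a)) < \<beta>" "\<forall>x\<in>C. \<beta> < c \<bullet> x"
    using separating_hyperplane_closed_point[OF \<open>convex C\<close> \<open>closed C\<close>] by blast
  have "(f b - f a) \<bullet> (- c) \<le> (- \<beta>) * (b - a)"
  proof (rule abs_cont_on_inner_diff_le[OF ac _ \<open>negligible N\<close>])
    fix t assume "t \<in> {a..b} - N"
    then obtain v where "(f has_vector_derivative v) (at t within {a..b})" "v \<in> C"
      using der by blast
    then show "\<exists>v. (f has_vector_derivative v) (at t within {a..b}) \<and> v \<bullet> (- c) \<le> - \<beta>"
      using c(2) by (force simp: inner_commute)
  qed (use \<open>a < b\<close> in simp)
  then have "\<beta> \<le> c \<bullet> ((1 / (b - a)) *\<^sub>R (f b - f a))"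
    using \<open>a < b\<close> by (simp add: inner_commute pos_le_divide_eq)
  then show False using c(1) by simp
qed

section \<open>Set-valued maps that are Lipschitz for the Hausdorff distance\<close>

lemma infdist_le_hausdist:
  fixes A B :: "'a::metric_space set"
  assumes "compact A" "a \<in> A"
  shows "infdist a B \<le> hausdist A B"
proof -
  have "compact ((\<lambda>a. infdist a B) ` A)"
    by (rule compact_continuous_image[OF _ assms(1)]) (intro continuous_intros)
  then have "bdd_above ((\<lambda>a. infdist a B) ` A)"
    by (intro bounded_imp_bdd_above compact_imp_bounded)
  then have "infdist a B \<le> (SUP a\<in>A. infdist a B)"
    by (rule cSUP_upper[OF assms(2)])
  then show ?thesis unfolding hausdist_def by simp
qed

locale hausdorff_lipschitz =
  fixes G :: "'a::euclidean_space \<Rightarrow> 'a set" and L :: real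
  assumes G_nonempty: "\<And>x. G x \<noteq> {}" and G_convex: "\<And>x. convex (G x)" and G_compact: "\<And>x. compact (G x)"
    and G_lipschitz: "\<And>x y. hausdist (G x) (G y) \<le> L * dist x y" and L_pos: "L > 0"
begin

lemma G_closed: "closed (G x)"
  using G_compact compact_imp_closed by blast

lemma infdist_le_lipschitz: "v \<in> G x \<Longrightarrow> infdist v (G y) \<le> L * dist x y"
  using infdist_le_hausdist[OF G_compact] G_lipschitz order_trans by blast

lemma dist_closest_point: "dist w (closest_point (G y) w) = infdist w (G y)"
  unfolding infdist_eq_setdist by (rule setdist_closest_point[OF G_closed G_nonempty, symmetric])

lemma closest_point_in: "closest_point (G y) w \<in> G y"
  by (rule closest_point_in_set[OF G_closed G_nonempty])

lemma exists_close_point: "v \<in> G x \<Longrightarrow> \<exists>w\<in>G y. dist v w \<le> L * dist x y"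
  using closest_point_in dist_closest_point infdist_le_lipschitz by metis

lemma infdist_le_infdist_plus: "infdist w (G y) \<le> infdist w (G x) + L * dist x y"
proof -
  obtain v where v: "v \<in> G y" "dist (closest_point (G x) w) v \<le> L * dist x y"
    using exists_close_point[OF closest_point_in] by blast
  have "infdist w (G y) \<le> dist w (closest_point (G x) w) + dist (closest_point (G x) w) v"
    using infdist_le[OF v(1), of w] dist_triangle[of w v "closest_point (G x) w"] by linarith
  then show ?thesis using v(2) dist_closest_point[of w x] by simp
qed

text \<open>Each projection of v makes an obtuse angle with the points of its own set that lie within
  L |x - x'| of the other projection; adding the two angle conditions bounds the square of the
  distance of the projections.\<close>
lemma dist_closest_point_le:
  "dist (closest_point (G x) v) (closest_point (G x') v') \<le>
     dist v v' + sqrt (L * dist x x' * (infdist v (G x) + infdist v (G x')))"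
proof -
  define p where "p = closest_point (G x) v"
  define q where "q = closest_point (G x') v"
  define h where "h = L * dist x x'"
  obtain p' where p': "p' \<in> G x'" "dist p p' \<le> h"
    using exists_close_point[OF closest_point_in[of x v], of x'] by (auto simp: p_def h_def)
  obtain q' where q': "q' \<in> G x" "dist q q' \<le> h"
    using exists_close_point[OF closest_point_in[of x' v], of x] by (auto simp: q_def h_def dist_commute)
  have "inner (v - p) (q' - p) \<le> 0" "inner (v - q) (p' - q) \<le> 0"
    unfolding p_def q_def using closest_point_dot[OF G_convex G_closed] p' q' by auto
  then have "inner (v - p) (q - p) \<le> norm (v - p) * h" "inner (v - q) (p - q) \<le> norm (v - q) * h"
    using norm_cauchy_schwarz[of "v - p" "q - q'"] norm_cauchy_schwarz[of "v - q" "p - p'"]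
      mult_left_mono[OF q'(2), of "norm (v - p)"] mult_left_mono[OF p'(2), of "norm (v - q)"]
    by (auto simp: inner_diff_right dist_norm)
  then have "(norm (p - q))\<^sup>2 \<le> h * (norm (v - p) + norm (v - q))"
    by (simp add: power2_norm_eq_inner inner_diff_left inner_diff_right inner_commute algebra_simps)
  also have "\<dots> = L * dist x x' * (infdist v (G x) + infdist v (G x'))"
    using dist_closest_point[of v x] dist_closest_point[of v x'] by (simp add: h_def p_def q_def dist_norm)
  finally have "dist p q \<le> sqrt (L * dist x x' * (infdist v (G x) + infdist v (G x')))"
    by (simp add: dist_norm real_le_rsqrt)
  moreover have "dist q (closest_point (G x') v') \<le> dist v v'"
    unfolding q_def by (rule closest_point_lipschitz[OF G_convex G_closed G_nonempty])
  ultimately show ?thesis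
    using dist_triangle[of p "closest_point (G x') v'" q] by (simp add: p_def)
qed

lemma continuous_on_closest_point_comp:
  assumes x: "continuous_on S x" and w: "continuous_on S w"
  shows "continuous_on S (\<lambda>t. closest_point (G (x t)) (w t))"
  unfolding continuous_on_def
proof
  fix t assume "t \<in> S"
  define g where "g s = dist (w s) (w t) +
    sqrt (L * dist (x s) (x t) * (2 * infdist (w s) (G (x t)) + L * dist (x s) (x t)))" for s
  have "(x \<longlongrightarrow> x t) (at t within S)" "(w \<longlongrightarrow> w t) (at t within S)"
    using x w \<open>t \<in> S\<close> unfolding continuous_on_def by blast+
  then have "(g \<longlongrightarrow> g t) (at t within S)"
    unfolding g_def by (intro tendsto_intros tendsto_infdist)
  then have g0: "(g \<longlongrightarrow> 0) (at t within S)"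
    by (simp add: g_def)
  have le: "dist (closest_point (G (x s)) (w s)) (closest_point (G (x t)) (w t)) \<le> g s" for s
  proof -
    have "infdist (w s) (G (x s)) + infdist (w s) (G (x t)) \<le>
        2 * infdist (w s) (G (x t)) + L * dist (x s) (x t)"
      using infdist_le_infdist_plus[of "w s" "x s" "x t"] by (simp add: dist_commute)
    then have "sqrt (L * dist (x s) (x t) * (infdist (w s) (G (x s)) + infdist (w s) (G (x t))))
        \<le> sqrt (L * dist (x s) (x t) * (2 * infdist (w s) (G (x t)) + L * dist (x s) (x t)))"
      using L_pos by (intro real_sqrt_le_mono mult_left_mono) auto
    then show ?thesis
      using dist_closest_point_le[of "x s" "w s" "x t" "w t"] unfolding g_def by linarith
  qed
  have "((\<lambda>s. dist (closest_point (G (x s)) (w s)) (closest_point (G (x t)) (w t))) \<longlongrightarrow> 0) (at t within S)"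
    by (rule tendsto_sandwich[where f="\<lambda>_. 0" and h=g, OF _ _ tendsto_const g0])
      (auto intro: always_eventually le)
  then show "((\<lambda>s. closest_point (G (x s)) (w s)) \<longlongrightarrow> closest_point (G (x t)) (w t)) (at t within S)"
    using tendsto_dist_iff by blast
qed

lemma norm_le_linear_growth:
  obtains M where "M \<ge> 0" "\<And>z v. v \<in> G z \<Longrightarrow> norm v \<le> M + L * norm (z - c)"
proof -
  obtain M where M: "M \<ge> 0" "\<And>v. v \<in> G c \<Longrightarrow> norm v \<le> M"
    using compact_imp_bounded[OF G_compact] bounded_iff
    by (metis norm_ge_zero order_trans G_nonempty ex_in_conv)
  have "norm v \<le> M + L * norm (z - c)" if v: "v \<in> G z" for z v
  proof -
    obtain w where "w \<in> G c" "dist v w \<le> L * dist z c"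
      using exists_close_point[OF v] by blast
    moreover have "norm v \<le> norm w + dist v w"
      using norm_triangle_ineq2[of v w] by (simp add: dist_norm)
    ultimately show ?thesis
      using M(2)[of w] by (simp add: dist_norm)
  qed
  then show thesis using that M(1) by blast
qed

end

section \<open>Local solutions by successive projections\<close>

lemma uniform_limit_of_geometric_steps:
  fixes V :: "nat \<Rightarrow> 'b \<Rightarrow> 'c::banach"
  assumes step: "\<And>k t. t \<in> S \<Longrightarrow> norm (V (Suc k) t - V k t) \<le> c / 2 ^ k"
  obtains W where "uniform_limit S V W sequentially" "\<And>t. t \<in> S \<Longrightarrow> norm (W t - V 0 t) \<le> 2 * c"
proof
  define d where "d k t = V (Suc k) t - V k t" for k t
  have V_eq: "V 0 t + (\<Sum>k<n. d k t) = V n t" for n t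
    using sum_lessThan_telescope[of "\<lambda>k. V k t" n] by (simp add: d_def)
  have summable: "summable (\<lambda>k. c * (1/2) ^ k)"
    by (intro summable_mult summable_geometric) simp
  have d_le: "norm (d k t) \<le> c * (1/2) ^ k" if "t \<in> S" for k t
    using step[OF that, of k] by (simp add: d_def power_one_over)
  have "uniform_limit S (\<lambda>n t. \<Sum>k<n. d k t) (\<lambda>t. \<Sum>k. d k t) sequentially"
    by (rule Weierstrass_m_test[OF d_le summable])
  then have "uniform_limit S (\<lambda>n t. V 0 t + (\<Sum>k<n. d k t)) (\<lambda>t. V 0 t + (\<Sum>k. d k t)) sequentially"
    by (rule uniform_limit_add[OF uniform_limit_const])
  then show "uniform_limit S V (\<lambda>t. V 0 t + (\<Sum>k. d k t)) sequentially"
    by (simp add: V_eq)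
  fix t assume "t \<in> S"
  have "norm (\<Sum>k. d k t) \<le> (\<Sum>k. c * (1/2) ^ k)"
    by (rule norm_suminf_le[OF d_le[OF \<open>t \<in> S\<close>] summable])
  also have "\<dots> = 2 * c"
    using suminf_mult[of "\<lambda>k. (1/2::real) ^ k" c] suminf_geometric[of "1/2::real"] by simp
  finally show "norm (V 0 t + (\<Sum>k. d k t) - V 0 t) \<le> 2 * c" by simp
qed

definition backward_primitive :: "real \<Rightarrow> 'a \<Rightarrow> (real \<Rightarrow> 'a::banach) \<Rightarrow> real \<Rightarrow> 'a" where
  "backward_primitive b z V t = z - integral {t..b} V"

lemma backward_primitive_end [simp]: "backward_primitive b z V b = z"
  by (simp add: backward_primitive_def)

lemma backward_primitive_const: "t \<le> b \<Longrightarrow> backward_primitive b z (\<lambda>_. u) t = z - (b - t) *\<^sub>R u"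
  by (simp add: backward_primitive_def)

lemma continuous_on_backward_primitive:
  "continuous_on {a..b} V \<Longrightarrow> continuous_on {a..b} (backward_primitive b z V)"
  unfolding backward_primitive_def
  by (intro continuous_intros indefinite_integral_continuous_1' integrable_continuous_real)

lemma backward_primitive_has_vector_derivative:
  assumes V: "continuous_on {a..b} V" and t: "t \<in> {a..b}"
  shows "(backward_primitive b z V has_vector_derivative V t) (at t within {a..b})"
proof -
  have "((\<lambda>s. z - integral {a..b} V + integral {a..s} V) has_vector_derivative V t) (at t within {a..b})"
    using integral_has_vector_derivative[OF V t] by (auto intro!: derivative_eq_intros)
  moreover have "backward_primitive b z V s = z - integral {a..b} V + integral {a..s} V"
    if "s \<in> {a..b}" for s
    using Henstock_Kurzweil_Integration.integral_combine[where a=a and c=s and b=b and f=V]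
      integrable_continuous_real[OF V] that
    by (simp add: backward_primitive_def algebra_simps)
  ultimately show ?thesis
    by (rule has_vector_derivative_transform[OF t, rotated]) simp
qed

lemma norm_backward_primitive_diff_le:
  assumes V: "continuous_on {a..b} V" and W: "continuous_on {a..b} W" and t: "t \<in> {a..b}"
    and B: "\<And>s. s \<in> {t..b} \<Longrightarrow> norm (V s - W s) \<le> B"
  shows "norm (backward_primitive b z V t - backward_primitive b z' W t) \<le> norm (z - z') + B * (b - t)"
proof -
  have "continuous_on {t..b} V" "continuous_on {t..b} W"
    using V W t by (auto intro: continuous_on_subset)
  then have "backward_primitive b z V t - backward_primitive b z' W t
      = (z - z') - integral {t..b} (\<lambda>s. V s - W s)"
    by (simp add: backward_primitive_def integral_diff integrable_continuous_real)
  moreover have "norm (integral {t..b} (\<lambda>s. V s - W s)) \<le> B * (b - t)"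
    using t B \<open>continuous_on {t..b} V\<close> \<open>continuous_on {t..b} W\<close>
    by (intro integral_bound) (auto intro: continuous_intros)
  ultimately show ?thesis
    using norm_triangle_ineq4[of "z - z'" "integral {t..b} (\<lambda>s. V s - W s)"] by simp
qed

context hausdorff_lipschitz
begin

fun filippov_iter :: "real \<Rightarrow> 'a \<Rightarrow> 'a \<Rightarrow> nat \<Rightarrow> real \<Rightarrow> 'a" where
  "filippov_iter b z u 0 = (\<lambda>_. u)"
| "filippov_iter b z u (Suc k) =
     (\<lambda>t. closest_point (G (backward_primitive b z (filippov_iter b z u k) t)) (filippov_iter b z u k t))"

lemma continuous_on_filippov_iter: "continuous_on {a..b} (filippov_iter b z u k)"
  by (induction k) (auto intro: continuous_on_closest_point_comp continuous_on_backward_primitive)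

lemma filippov_iter_step_le:
  assumes "L * (b - a) \<le> 1/2"
    and \<rho>: "\<And>t. t \<in> {a..b} \<Longrightarrow> infdist u (G (q - (b - t) *\<^sub>R u)) \<le> \<rho>" and "t \<in> {a..b}"
  shows "norm (filippov_iter b z u (Suc k) t - filippov_iter b z u k t) \<le> (\<rho> + L * norm (z - q)) / 2 ^ k"
  using \<open>t \<in> {a..b}\<close>
proof (induction k arbitrary: t)
  case 0
  have "norm (filippov_iter b z u (Suc 0) t - filippov_iter b z u 0 t) = infdist u (G (z - (b - t) *\<^sub>R u))"
    using dist_closest_point 0 by (simp add: backward_primitive_const dist_norm norm_minus_commute)
  also have "\<dots> \<le> infdist u (G (q - (b - t) *\<^sub>R u)) + L * norm (z - q)"
    using infdist_le_infdist_plus[of u "z - (b - t) *\<^sub>R u" "q - (b - t) *\<^sub>R u"]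
    by (simp add: dist_norm norm_minus_commute)
  finally show ?case using \<rho>[OF 0] by simp
next
  case (Suc k)
  let ?V = "filippov_iter b z u" and ?c = "\<rho> + L * norm (z - q)"
  have "\<rho> \<ge> 0" using \<rho>[OF Suc.prems] infdist_nonneg[of u "G (q - (b - t) *\<^sub>R u)"] by linarith
  then have "?c \<ge> 0" using L_pos by simp
  have "norm (?V (Suc (Suc k)) t - ?V (Suc k) t)
      = infdist (?V (Suc k) t) (G (backward_primitive b z (?V (Suc k)) t))"
    using dist_closest_point by (simp add: dist_norm norm_minus_commute)
  also have "\<dots> \<le> L * dist (backward_primitive b z (?V k) t) (backward_primitive b z (?V (Suc k)) t)"
    using infdist_le_lipschitz[OF closest_point_in] by simp
  also have "\<dots> \<le> L * (?c / 2 ^ k * (b - t))"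
  proof -
    have "norm (?V k s - ?V (Suc k) s) \<le> ?c / 2 ^ k" if "s \<in> {t..b}" for s
      using Suc.IH[of s] Suc.prems that by (simp only: norm_minus_commute) simp
    from norm_backward_primitive_diff_le[OF continuous_on_filippov_iter[of a b z u k]
          continuous_on_filippov_iter[of a b z u "Suc k"] Suc.prems this, of z z]
    have "norm (backward_primitive b z (?V k) t - backward_primitive b z (?V (Suc k)) t) \<le> ?c / 2 ^ k * (b - t)"
      by simp
    then have "L * norm (backward_primitive b z (?V k) t - backward_primitive b z (?V (Suc k)) t)
        \<le> L * (?c / 2 ^ k * (b - t))"
      by (rule mult_left_mono) (use L_pos in simp)
    then show ?thesis by (simp only: dist_norm)
  qed
  also have "\<dots> \<le> ?c / 2 ^ k * (L * (b - a))"
  proof -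
    have "L * (b - t) \<le> L * (b - a)" using Suc.prems L_pos by simp
    then show ?thesis
      using mult_left_mono[of "L * (b - t)" "L * (b - a)" "?c / 2 ^ k"] \<open>?c \<ge> 0\<close>
      by (simp add: algebra_simps)
  qed
  also have "\<dots> \<le> ?c / 2 ^ Suc k"
    using mult_left_mono[OF assms(1), of "?c / 2 ^ k"] \<open>?c \<ge> 0\<close> by simp
  finally show ?case .
qed

lemma filippov_limit_mem:
  assumes lim: "uniform_limit {a..b} (filippov_iter b z u) W sequentially" and "t \<in> {a..b}"
  shows "W t \<in> G (backward_primitive b z W t)"
proof -
  let ?V = "filippov_iter b z u"
  have "uniform_limit {t..b} ?V W sequentially"
    using uniform_limit_on_subset[OF lim] \<open>t \<in> {a..b}\<close> by auto
  from uniform_limit_integral[OF this continuous_on_filippov_iter trivial_limit_sequentially]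
  obtain I J where I: "\<And>k. (?V k has_integral I k) {t..b}" and J: "(W has_integral J) {t..b}"
    and "I \<longlonglongrightarrow> J" by blast
  then have "(\<lambda>k. backward_primitive b z (?V k) t) \<longlonglongrightarrow> backward_primitive b z W t"
    by (simp add: backward_primitive_def integral_unique[OF I] integral_unique[OF J] tendsto_diff)
  then have upper: "(\<lambda>k. L * dist (backward_primitive b z (?V k) t) (backward_primitive b z W t)) \<longlonglongrightarrow> 0"
    using tendsto_mult_right_zero tendsto_dist_iff by blast
  have lower: "(\<lambda>k. infdist (?V (Suc k) t) (G (backward_primitive b z W t))) \<longlonglongrightarrow>
      infdist (W t) (G (backward_primitive b z W t))"
    by (intro tendsto_infdist LIMSEQ_Suc[OF tendsto_uniform_limitI[OF lim \<open>t \<in> {a..b}\<close>]])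
  have "infdist (?V (Suc k) t) (G (backward_primitive b z W t))
      \<le> L * dist (backward_primitive b z (?V k) t) (backward_primitive b z W t)" for k
    using infdist_le_lipschitz[OF closest_point_in] by simp
  then have "infdist (W t) (G (backward_primitive b z W t)) \<le> 0"
    by (intro LIMSEQ_le[OF lower upper]) auto
  then show ?thesis
    using in_closed_iff_infdist_zero[OF G_closed G_nonempty] infdist_nonneg by (metis order_antisym)
qed

lemma local_filippov:
  assumes "a < b" "L * (b - a) \<le> 1/2"
    and \<rho>: "\<And>t. t \<in> {a..b} \<Longrightarrow> infdist u (G (q - (b - t) *\<^sub>R u)) \<le> \<rho>"
  obtains W where "continuous_on {a..b} W" "\<And>t. t \<in> {a..b} \<Longrightarrow> W t \<in> G (backward_primitive b z W t)"
    "norm (backward_primitive b z W a - (q - (b - a) *\<^sub>R u))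
       \<le> (1 + 2 * L * (b - a)) * norm (z - q) + 2 * (b - a) * \<rho>"
proof -
  let ?V = "filippov_iter b z u" and ?c = "\<rho> + L * norm (z - q)"
  have "\<And>k t. t \<in> {a..b} \<Longrightarrow> norm (?V (Suc k) t - ?V k t) \<le> ?c / 2 ^ k"
    by (rule filippov_iter_step_le[OF assms(2) \<rho>])
  from uniform_limit_of_geometric_steps[of "{a..b}" ?V ?c, OF this]
  obtain W where lim: "uniform_limit {a..b} ?V W sequentially"
    and near: "\<And>t. t \<in> {a..b} \<Longrightarrow> norm (W t - u) \<le> 2 * ?c"
    by auto
  have W: "continuous_on {a..b} W"
    by (rule uniform_limit_theorem[OF _ lim]) (auto intro: always_eventually continuous_on_filippov_iter)
  have "norm (backward_primitive b z W a - backward_primitive b q (\<lambda>_. u) a)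
      \<le> norm (z - q) + 2 * ?c * (b - a)"
    using near \<open>a < b\<close> by (intro norm_backward_primitive_diff_le[OF W continuous_on_const]) auto
  then have "norm (backward_primitive b z W a - (q - (b - a) *\<^sub>R u))
      \<le> (1 + 2 * L * (b - a)) * norm (z - q) + 2 * (b - a) * \<rho>"
    using \<open>a < b\<close> by (simp add: backward_primitive_const algebra_simps)
  then show thesis
    using that W filippov_limit_mem[OF lim] by blast
qed

end

section \<open>Trajectories\<close>

lemma has_vector_derivative_interior_transfer:
  assumes "(f has_vector_derivative v) (at t within {a..b})" "t \<in> {a<..<b}"
    and "\<And>s. s \<in> {a<..<b} \<Longrightarrow> g s = f s"
  shows "(g has_vector_derivative v) (at t within S)"
proof -
  have "at t within {a..b} = at t"
    using assms(2) by (intro at_within_interior) simp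
  then have "(f has_vector_derivative v) (at t)" using assms(1) by simp
  then have "(g has_vector_derivative v) (at t)"
    by (rule has_vector_derivative_transform_within_open[OF _ open_greaterThanLessThan assms(2)])
      (simp add: assms(3))
  then show ?thesis by (rule has_vector_derivative_at_within)
qed

context hausdorff_lipschitz
begin

definition solves_ae :: "real \<Rightarrow> real \<Rightarrow> (real \<Rightarrow> 'a) \<Rightarrow> bool" where
  "solves_ae a b x \<longleftrightarrow> (\<exists>N. negligible N \<and>
     (\<forall>t\<in>{a..b} - N. \<exists>v. (x has_vector_derivative v) (at t within {a..b}) \<and> v \<in> G (x t)))"

definition trajectory :: "real \<Rightarrow> (real \<Rightarrow> 'a) \<Rightarrow> bool" where
  "trajectory T x \<longleftrightarrow> abs_cont_on 0 T x \<and> solves_ae 0 T x"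

text \<open>Solutions are built backwards piece by piece; pieces are taken Lipschitz rather than
  absolutely continuous because Lipschitz continuity survives gluing (lipschitz_on_concat_max).\<close>
definition lipschitz_trajectory :: "real \<Rightarrow> real \<Rightarrow> (real \<Rightarrow> 'a) \<Rightarrow> bool" where
  "lipschitz_trajectory a b x \<longleftrightarrow> a \<le> b \<and> (\<exists>M. M-lipschitz_on {a..b} x) \<and> solves_ae a b x"

lemma Sol_iff: "x \<in> Sol G T t0 x0 \<longleftrightarrow> trajectory T x \<and> x t0 = x0"
  by (auto simp: Sol_def trajectory_def solves_ae_def negligible_iff_null_sets)

lemma solves_ae_subinterval:
  assumes "solves_ae a b x" "a \<le> c" "d \<le> b"
  shows "solves_ae c d x"
proof -
  obtain N where "negligible N"
    and N: "\<And>t. t \<in> {a..b} - N \<Longrightarrow> \<exists>v. (x has_vector_derivative v) (at t within {a..b}) \<and> v \<in> G (x t)"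
    using assms(1) unfolding solves_ae_def by blast
  have "\<exists>v. (x has_vector_derivative v) (at t within {c..d}) \<and> v \<in> G (x t)" if "t \<in> {c..d} - N" for t
    using N[of t] that assms(2,3) has_vector_derivative_within_subset[of x _ t "{a..b}" "{c..d}"] by auto
  then show ?thesis using \<open>negligible N\<close> unfolding solves_ae_def by blast
qed

lemma lipschitz_trajectory_imp_trajectory: "lipschitz_trajectory 0 T x \<Longrightarrow> trajectory T x"
  unfolding lipschitz_trajectory_def trajectory_def by (auto intro: lipschitz_on_imp_abs_cont_on)

lemma lipschitz_trajectory_const: "lipschitz_trajectory b b (\<lambda>_. z)"
proof -
  have "0-lipschitz_on {b..b} (\<lambda>_. z)" by (rule lipschitz_on_constant)
  moreover have "\<forall>t\<in>{b..b} - {b}. \<exists>v. ((\<lambda>_. z) has_vector_derivative v) (at t within {b..b}) \<and> v \<in> G z"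
    by simp
  ultimately show ?thesis
    unfolding lipschitz_trajectory_def solves_ae_def using negligible_sing by blast
qed

lemma lipschitz_trajectory_backward_primitive:
  assumes "a \<le> b" and W: "continuous_on {a..b} W"
    and mem: "\<And>t. t \<in> {a..b} \<Longrightarrow> W t \<in> G (backward_primitive b z W t)"
  shows "lipschitz_trajectory a b (backward_primitive b z W)"
proof -
  have "bounded (W ` {a..b})"
    by (rule compact_imp_bounded[OF compact_continuous_image[OF W compact_Icc]])
  then obtain M where "M > 0" and M: "\<And>t. t \<in> {a..b} \<Longrightarrow> norm (W t) \<le> M"
    unfolding bounded_pos by blast
  note der = backward_primitive_has_vector_derivative[OF W]
  have "onorm (\<lambda>h::real. h *\<^sub>R W t) \<le> M" if "t \<in> {a..b}" for t
  proof -
    have "onorm (\<lambda>h::real. h *\<^sub>R W t) = onorm (\<lambda>h::real. h) * norm (W t)"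
      by (rule onorm_scaleR_left) simp
    then show ?thesis using M[OF that] by (simp add: onorm_id)
  qed
  then have "M-lipschitz_on {a..b} (backward_primitive b z W)"
    using der \<open>M > 0\<close> unfolding has_vector_derivative_def
    by (intro bounded_derivative_imp_lipschitz[where f'="\<lambda>t h. h *\<^sub>R W t"]) auto
  moreover have "\<forall>t\<in>{a..b} - {}. \<exists>v. (backward_primitive b z W has_vector_derivative v) (at t within {a..b})
      \<and> v \<in> G (backward_primitive b z W t)"
    using der mem by blast
  then have "solves_ae a b (backward_primitive b z W)"
    unfolding solves_ae_def using negligible_empty by blast
  ultimately show ?thesis using \<open>a \<le> b\<close> unfolding lipschitz_trajectory_def by blast
qed

lemma lipschitz_trajectory_glue:
  assumes x: "lipschitz_trajectory a c x" and y: "lipschitz_trajectory c b y" and "x c = y c"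
  shows "lipschitz_trajectory a b (\<lambda>t. if t \<le> c then x t else y t)" (is "lipschitz_trajectory a b ?g")
proof -
  obtain Mx Nx where "a \<le> c" "Mx-lipschitz_on {a..c} x" "negligible Nx"
    and Nx: "\<And>t. t \<in> {a..c} - Nx \<Longrightarrow> \<exists>v. (x has_vector_derivative v) (at t within {a..c}) \<and> v \<in> G (x t)"
    using x unfolding lipschitz_trajectory_def solves_ae_def by blast
  obtain My Ny where "c \<le> b" "My-lipschitz_on {c..b} y" "negligible Ny"
    and Ny: "\<And>t. t \<in> {c..b} - Ny \<Longrightarrow> \<exists>v. (y has_vector_derivative v) (at t within {c..b}) \<and> v \<in> G (y t)"
    using y unfolding lipschitz_trajectory_def solves_ae_def by blast
  have "(max Mx My)-lipschitz_on {a..b} ?g"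
    by (rule lipschitz_on_concat_max) fact+
  moreover have "\<exists>v. (?g has_vector_derivative v) (at t within {a..b}) \<and> v \<in> G (?g t)"
    if t: "t \<in> {a..b} - (Nx \<union> Ny \<union> {a, c, b})" for t
  proof (cases "t < c")
    case True
    then obtain v where "(x has_vector_derivative v) (at t within {a..c})" "v \<in> G (x t)"
      using Nx[of t] t by auto
    moreover have "(?g has_vector_derivative v) (at t within {a..b})"
      by (rule has_vector_derivative_interior_transfer[OF calculation(1)]) (use True t in auto)
    ultimately show ?thesis using True by auto
  next
    case False
    then obtain v where "(y has_vector_derivative v) (at t within {c..b})" "v \<in> G (y t)"
      using Ny[of t] t by auto
    moreover have "(?g has_vector_derivative v) (at t within {a..b})"
      by (rule has_vector_derivative_interior_transfer[OF calculation(1)]) (use False t in auto)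
    ultimately show ?thesis using False t by auto
  qed
  moreover have "negligible (Nx \<union> Ny \<union> {a, c, b})"
    using \<open>negligible Nx\<close> \<open>negligible Ny\<close> by simp
  moreover have "a \<le> b" using \<open>a \<le> c\<close> \<open>c \<le> b\<close> by simp
  ultimately show ?thesis
    unfolding lipschitz_trajectory_def solves_ae_def by blast
qed

lemma trajectory_abs_cont_on: "trajectory T x \<Longrightarrow> 0 \<le> a \<Longrightarrow> b \<le> T \<Longrightarrow> abs_cont_on a b x"
  unfolding trajectory_def using abs_cont_on_subinterval by blast

lemma trajectory_solves_ae: "trajectory T x \<Longrightarrow> 0 \<le> a \<Longrightarrow> b \<le> T \<Longrightarrow> solves_ae a b x"
  unfolding trajectory_def using solves_ae_subinterval by blast

end

section \<open>Filippov's theorem\<close>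

lemma exists_fine_mesh:
  assumes "T > 0" "\<delta> > 0"
  obtains m :: nat where "m > 0" "T / m < \<delta>"
proof -
  obtain m :: nat where "T / \<delta> < m" using reals_Archimedean2 by blast
  then have "T < \<delta> * m" using assms by (simp add: field_simps)
  moreover from this have "m > 0" using assms by (cases m) auto
  ultimately show thesis using that assms by (simp add: field_simps)
qed

context hausdorff_lipschitz
begin

lemma trajectory_slope_infdist_le:
  assumes \<eta>: "trajectory T \<eta>" and "0 \<le> a" "a < b" "b \<le> T"
    and osc: "\<And>r. r \<in> {a..b} \<Longrightarrow> norm (\<eta> r - \<eta> a) \<le> \<omega>"
  shows "infdist ((1 / (b - a)) *\<^sub>R (\<eta> b - \<eta> a)) (G (\<eta> a)) \<le> L * \<omega>"
proof -
  define C where "C = (\<Union>g\<in>G (\<eta> a). \<Union>w\<in>cball 0 (L * \<omega>). {g + w})"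
  have "convex C" unfolding C_def by (rule convex_sums[OF G_convex convex_cball])
  have "closed C" unfolding C_def by (rule compact_imp_closed[OF compact_sums'[OF G_compact compact_cball]])
  obtain N where "negligible N" and N: "\<And>t. t \<in> {a..b} - N \<Longrightarrow>
      \<exists>v. (\<eta> has_vector_derivative v) (at t within {a..b}) \<and> v \<in> G (\<eta> t)"
    using trajectory_solves_ae[OF \<eta> \<open>0 \<le> a\<close> \<open>b \<le> T\<close>] unfolding solves_ae_def by blast
  have "\<exists>v. (\<eta> has_vector_derivative v) (at t within {a..b}) \<and> v \<in> C" if t: "t \<in> {a..b} - N" for t
  proof -
    obtain v where v: "(\<eta> has_vector_derivative v) (at t within {a..b})" "v \<in> G (\<eta> t)"
      using N[OF t] by blast
    obtain g where "g \<in> G (\<eta> a)" "dist v g \<le> L * dist (\<eta> t) (\<eta> a)"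
      using exists_close_point[OF v(2)] by blast
    moreover have "L * dist (\<eta> t) (\<eta> a) \<le> L * \<omega>"
      using osc[of t] t L_pos by (simp add: dist_norm)
    ultimately have "v \<in> C"
      unfolding C_def by (intro UN_I[of g] UN_I[of "v - g"]) (auto simp: dist_norm norm_minus_commute)
    then show ?thesis using v(1) by blast
  qed
  then have "(1 / (b - a)) *\<^sub>R (\<eta> b - \<eta> a) \<in> C"
    using abs_cont_on_slope_mem[OF trajectory_abs_cont_on[OF \<eta> \<open>0 \<le> a\<close> \<open>b \<le> T\<close>]
        \<open>a < b\<close> \<open>negligible N\<close> \<open>convex C\<close> \<open>closed C\<close>] by blast
  then obtain g w where "g \<in> G (\<eta> a)" "norm w \<le> L * \<omega>" "(1 / (b - a)) *\<^sub>R (\<eta> b - \<eta> a) = g + w"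
    unfolding C_def by auto
  then show ?thesis
    using infdist_le[of g "G (\<eta> a)" "(1 / (b - a)) *\<^sub>R (\<eta> b - \<eta> a)"] by (simp add: dist_norm)
qed

lemma filippov_step:
  assumes \<eta>: "trajectory T \<eta>" and "0 \<le> a" "a < b" "b \<le> T" "L * (b - a) \<le> 1/2"
    and osc: "\<And>r. r \<in> {a..b} \<Longrightarrow> norm (\<eta> r - \<eta> a) \<le> \<omega>"
    and \<zeta>: "lipschitz_trajectory b T \<zeta>"
  obtains \<zeta>' where "lipschitz_trajectory a T \<zeta>'" "\<zeta>' T = \<zeta> T"
    "norm (\<zeta>' a - \<eta> a) \<le> (1 + 2 * L * (b - a)) * norm (\<zeta> b - \<eta> b) + 4 * L * (b - a) * \<omega>"
proof -
  define u where "u = (1 / (b - a)) *\<^sub>R (\<eta> b - \<eta> a)"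
  have \<eta>a: "\<eta> b - (b - a) *\<^sub>R u = \<eta> a" using \<open>a < b\<close> by (simp add: u_def)
  have "infdist u (G (\<eta> b - (b - t) *\<^sub>R u)) \<le> 2 * L * \<omega>" if "t \<in> {a..b}" for t
  proof -
    have "(b - t) * (1 / (b - a)) = 1 - (t - a) / (b - a)"
      using \<open>a < b\<close> by (simp add: field_simps)
    then have "\<eta> b - (b - t) *\<^sub>R u - \<eta> a = ((t - a) / (b - a)) *\<^sub>R (\<eta> b - \<eta> a)"
      unfolding u_def scaleR_scaleR by (simp add: scaleR_diff_left)
    then have "norm (\<eta> b - (b - t) *\<^sub>R u - \<eta> a) = \<bar>(t - a) / (b - a)\<bar> * norm (\<eta> b - \<eta> a)"
      by simp
    also have "\<dots> \<le> 1 * \<omega>"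
      using osc[of b] that \<open>a < b\<close> by (intro mult_mono) auto
    finally have "norm (\<eta> b - (b - t) *\<^sub>R u - \<eta> a) \<le> \<omega>" by simp
    then have "L * dist (\<eta> a) (\<eta> b - (b - t) *\<^sub>R u) \<le> L * \<omega>"
      using L_pos by (simp add: dist_norm norm_minus_commute)
    then show ?thesis
      using infdist_le_infdist_plus[of u "\<eta> b - (b - t) *\<^sub>R u" "\<eta> a"]
        trajectory_slope_infdist_le[OF assms(1-4) osc] by (simp add: u_def)
  qed
  from local_filippov[OF \<open>a < b\<close> \<open>L * (b - a) \<le> 1/2\<close> this]
  obtain W where W: "continuous_on {a..b} W" "\<And>t. t \<in> {a..b} \<Longrightarrow> W t \<in> G (backward_primitive b (\<zeta> b) W t)"
    and est: "norm (backward_primitive b (\<zeta> b) W a - \<eta> a)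
       \<le> (1 + 2 * L * (b - a)) * norm (\<zeta> b - \<eta> b) + 2 * (b - a) * (2 * L * \<omega>)"
    unfolding \<eta>a by blast
  define \<zeta>' where "\<zeta>' t = (if t \<le> b then backward_primitive b (\<zeta> b) W t else \<zeta> t)" for t
  have "lipschitz_trajectory a T \<zeta>'"
    unfolding \<zeta>'_def using \<open>a < b\<close> W \<zeta>
    by (intro lipschitz_trajectory_glue lipschitz_trajectory_backward_primitive) auto
  moreover have "\<zeta>' T = \<zeta> T" using \<open>b \<le> T\<close> by (auto simp: \<zeta>'_def)
  moreover have "\<zeta>' a = backward_primitive b (\<zeta> b) W a" using \<open>a < b\<close> by (simp add: \<zeta>'_def)
  ultimately show thesis using that est by (simp add: algebra_simps)
qed

lemma filippov_backward_iteration: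
  assumes \<eta>: "trajectory T \<eta>" and "h > 0" "real m * h = T" "L * h \<le> 1/2"
    and osc: "\<And>r s. r \<in> {0..T} \<Longrightarrow> s \<in> {0..T} \<Longrightarrow> \<bar>r - s\<bar> \<le> h \<Longrightarrow> norm (\<eta> r - \<eta> s) \<le> \<omega>"
    and "k \<le> m"
  shows "\<exists>\<zeta>. lipschitz_trajectory (T - real k * h) T \<zeta> \<and> \<zeta> T = y \<and>
    norm (\<zeta> (T - real k * h) - \<eta> (T - real k * h))
      \<le> (1 + 2 * L * h) ^ k * (norm (y - \<eta> T) + 4 * real k * h * L * \<omega>)"
  using \<open>k \<le> m\<close>
proof (induction k)
  case 0
  show ?case using lipschitz_trajectory_const by auto
next
  case (Suc k)
  then obtain \<zeta> where \<zeta>: "lipschitz_trajectory (T - real k * h) T \<zeta>" "\<zeta> T = y"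
    "norm (\<zeta> (T - real k * h) - \<eta> (T - real k * h))
      \<le> (1 + 2 * L * h) ^ k * (norm (y - \<eta> T) + 4 * real k * h * L * \<omega>)"
    by auto
  define a where "a = T - real (Suc k) * h"
  define b where "b = T - real k * h"
  have "b - a = h" by (simp add: a_def b_def algebra_simps)
  have "real (Suc k) * h \<le> real m * h" using Suc.prems \<open>h > 0\<close> by (intro mult_right_mono) auto
  then have "0 \<le> a" using \<open>real m * h = T\<close> by (simp add: a_def)
  have "b \<le> T" using \<open>h > 0\<close> by (simp add: b_def)
  have "\<omega> \<ge> 0" using osc[of b b] \<open>0 \<le> a\<close> \<open>b - a = h\<close> \<open>b \<le> T\<close> \<open>h > 0\<close> by auto
  have osc_a: "norm (\<eta> r - \<eta> a) \<le> \<omega>" if "r \<in> {a..b}" for r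
    using osc[of r a] that \<open>0 \<le> a\<close> \<open>b - a = h\<close> \<open>b \<le> T\<close> by auto
  have "a < b" "L * (b - a) \<le> 1/2" using \<open>b - a = h\<close> \<open>h > 0\<close> \<open>L * h \<le> 1/2\<close> by auto
  from filippov_step[OF \<eta> \<open>0 \<le> a\<close> \<open>a < b\<close> \<open>b \<le> T\<close> \<open>L * (b - a) \<le> 1/2\<close> osc_a \<zeta>(1)[folded b_def]]
  obtain \<zeta>' where \<zeta>': "lipschitz_trajectory a T \<zeta>'" "\<zeta>' T = y"
    "norm (\<zeta>' a - \<eta> a) \<le> (1 + 2 * L * h) * norm (\<zeta> b - \<eta> b) + 4 * L * h * \<omega>"
    unfolding \<open>b - a = h\<close> \<zeta>(2) by blast
  have "1 \<le> (1 + 2 * L * h) ^ Suc k" using L_pos \<open>h > 0\<close> by (intro one_le_power) simp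
  then have "4 * L * h * \<omega> \<le> (1 + 2 * L * h) ^ Suc k * (4 * L * h * \<omega>)"
    using mult_right_mono[of 1 "(1 + 2 * L * h) ^ Suc k" "4 * L * h * \<omega>"] L_pos \<open>h > 0\<close> \<open>\<omega> \<ge> 0\<close>
    by simp
  moreover have "(1 + 2 * L * h) * norm (\<zeta> b - \<eta> b)
      \<le> (1 + 2 * L * h) ^ Suc k * (norm (y - \<eta> T) + 4 * real k * h * L * \<omega>)"
    using mult_left_mono[OF \<zeta>(3), of "1 + 2 * L * h"] L_pos \<open>h > 0\<close> by (simp add: b_def)
  ultimately have "norm (\<zeta>' a - \<eta> a)
      \<le> (1 + 2 * L * h) ^ Suc k * (norm (y - \<eta> T) + 4 * real (Suc k) * h * L * \<omega>)"
    using \<zeta>'(3) by (simp add: algebra_simps)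
  then show ?case using \<zeta>' by (auto simp: a_def)
qed

lemma filippov_on_mesh:
  assumes \<eta>: "trajectory T \<eta>" and "h > 0" "real m * h = T" "L * h \<le> 1/2" "\<omega> \<ge> 0"
    and osc: "\<And>r s. r \<in> {0..T} \<Longrightarrow> s \<in> {0..T} \<Longrightarrow> \<bar>r - s\<bar> \<le> h \<Longrightarrow> norm (\<eta> r - \<eta> s) \<le> \<omega>"
  obtains \<zeta> where "trajectory T \<zeta>" "\<zeta> T = y"
    "norm (\<zeta> 0 - \<eta> 0) \<le> exp (2 * L * T) * (norm (y - \<eta> T) + 4 * L * T * \<omega>)"
proof -
  have "\<exists>\<zeta>. lipschitz_trajectory (T - real m * h) T \<zeta> \<and> \<zeta> T = y \<and>
      norm (\<zeta> (T - real m * h) - \<eta> (T - real m * h))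
      \<le> (1 + 2 * L * h) ^ m * (norm (y - \<eta> T) + 4 * real m * h * L * \<omega>)"
    by (rule filippov_backward_iteration[OF \<eta> assms(2-4) osc order_refl])
  then obtain \<zeta> where \<zeta>: "lipschitz_trajectory 0 T \<zeta>" "\<zeta> T = y"
    "norm (\<zeta> 0 - \<eta> 0) \<le> (1 + 2 * L * h) ^ m * (norm (y - \<eta> T) + 4 * L * T * \<omega>)"
    using \<open>real m * h = T\<close> by (auto simp: algebra_simps)
  have "(1 + 2 * L * h) ^ m \<le> exp (2 * L * h) ^ m"
    using L_pos \<open>h > 0\<close> by (intro power_mono) (auto simp: add.commute intro: exp_ge_add_one_self)
  also have "\<dots> = exp (2 * L * T)"
    using \<open>real m * h = T\<close> by (simp add: exp_of_nat_mult[symmetric] algebra_simps)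
  finally have "(1 + 2 * L * h) ^ m \<le> exp (2 * L * T)" .
  moreover have "T \<ge> 0"
    using \<open>h > 0\<close> \<open>real m * h = T\<close> by (metis of_nat_0_le_iff mult_nonneg_nonneg less_imp_le)
  then have "0 \<le> norm (y - \<eta> T) + 4 * L * T * \<omega>"
    using \<open>\<omega> \<ge> 0\<close> L_pos by simp
  ultimately have "norm (\<zeta> 0 - \<eta> 0) \<le> exp (2 * L * T) * (norm (y - \<eta> T) + 4 * L * T * \<omega>)"
    using \<zeta>(3) mult_right_mono by (blast intro: order_trans)
  then show thesis using that \<zeta>(2) lipschitz_trajectory_imp_trajectory[OF \<zeta>(1)] by blast
qed

lemma filippov:
  assumes "T > 0" and \<eta>: "trajectory T \<eta>" and "\<epsilon> > 0"
  obtains \<zeta> where "trajectory T \<zeta>" "\<zeta> T = y" "norm (\<zeta> 0 - \<eta> 0) \<le> exp (2 * L * T) * (norm (y - \<eta> T) + \<epsilon>)"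
proof -
  define \<omega> where "\<omega> = \<epsilon> / (4 * L * T + 1)"
  have "4 * L * T + 1 > 0" using \<open>T > 0\<close> L_pos by (simp add: add_pos_pos)
  then have "\<omega> > 0" "\<omega> * (4 * L * T + 1) = \<epsilon>" using \<open>\<epsilon> > 0\<close> by (simp_all add: \<omega>_def)
  then have "4 * L * T * \<omega> \<le> \<epsilon>" by (simp add: algebra_simps)
  have "uniformly_continuous_on {0..T} \<eta>"
    using \<eta> abs_cont_on_imp_continuous_on compact_uniformly_continuous compact_Icc
    unfolding trajectory_def by blast
  then obtain \<delta> where "\<delta> > 0" and \<delta>: "\<And>r s. r \<in> {0..T} \<Longrightarrow> s \<in> {0..T} \<Longrightarrow> dist r s < \<delta> \<Longrightarrow> dist (\<eta> r) (\<eta> s) < \<omega>"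
    using \<open>\<omega> > 0\<close> unfolding uniformly_continuous_on_def by blast
  obtain m :: nat where "m > 0" "T / m < min \<delta> (1 / (2 * L))"
    using exists_fine_mesh[OF \<open>T > 0\<close>, of "min \<delta> (1 / (2 * L))"] \<open>\<delta> > 0\<close> L_pos by auto
  define h where "h = T / m"
  have "h > 0" "real m * h = T" "L * h \<le> 1/2"
    using \<open>m > 0\<close> \<open>T > 0\<close> \<open>T / m < min \<delta> (1 / (2 * L))\<close> L_pos by (auto simp: h_def field_simps)
  have osc: "norm (\<eta> r - \<eta> s) \<le> \<omega>" if "r \<in> {0..T}" "s \<in> {0..T}" "\<bar>r - s\<bar> \<le> h" for r s
    using \<delta>[OF that(1,2)] that(3) \<open>T / m < min \<delta> (1 / (2 * L))\<close> by (simp add: h_def dist_norm dist_real_def)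
  obtain \<zeta> where \<zeta>: "trajectory T \<zeta>" "\<zeta> T = y"
    "norm (\<zeta> 0 - \<eta> 0) \<le> exp (2 * L * T) * (norm (y - \<eta> T) + 4 * L * T * \<omega>)"
    using filippov_on_mesh[OF \<eta> \<open>h > 0\<close> \<open>real m * h = T\<close> \<open>L * h \<le> 1/2\<close> less_imp_le[OF \<open>\<omega> > 0\<close>] osc]
    by blast
  note \<zeta>(3)
  also have "exp (2 * L * T) * (norm (y - \<eta> T) + 4 * L * T * \<omega>) \<le> exp (2 * L * T) * (norm (y - \<eta> T) + \<epsilon>)"
    using \<open>4 * L * T * \<omega> \<le> \<epsilon>\<close> by simp
  finally show thesis using that \<zeta>(1,2) by blast
qed

end

section \<open>Growth of trajectories\<close>

context hausdorff_lipschitz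
begin

lemma trajectory_norm_diff_le:
  assumes \<eta>: "trajectory T \<eta>" and "0 \<le> a" "a \<le> b" "b \<le> T"
    and growth: "\<And>z v. v \<in> G z \<Longrightarrow> norm v \<le> M + L * norm (z - c)"
    and R: "\<And>t. t \<in> {a..b} \<Longrightarrow> norm (\<eta> t - c) \<le> R" and "0 \<le> M + L * R"
  shows "norm (\<eta> b - \<eta> a) \<le> (M + L * R) * (b - a)"
proof -
  obtain N where "negligible N" and N: "\<And>t. t \<in> {a..b} - N \<Longrightarrow>
      \<exists>v. (\<eta> has_vector_derivative v) (at t within {a..b}) \<and> v \<in> G (\<eta> t)"
    using trajectory_solves_ae[OF \<eta> \<open>0 \<le> a\<close> \<open>b \<le> T\<close>] unfolding solves_ae_def by blast
  have "\<exists>v. (\<eta> has_vector_derivative v) (at t within {a..b}) \<and> norm v \<le> M + L * R"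
    if t: "t \<in> {a..b} - N" for t
  proof -
    obtain v where "(\<eta> has_vector_derivative v) (at t within {a..b})" "v \<in> G (\<eta> t)"
      using N[OF t] by blast
    moreover have "M + L * norm (\<eta> t - c) \<le> M + L * R"
      using R[of t] t L_pos by simp
    ultimately show ?thesis using growth by (blast intro: order_trans)
  qed
  then show ?thesis
    by (rule abs_cont_on_norm_diff_le[OF trajectory_abs_cont_on[OF \<eta> \<open>0 \<le> a\<close> \<open>b \<le> T\<close>]
          \<open>a \<le> b\<close> \<open>negligible N\<close> \<open>0 \<le> M + L * R\<close>])
qed

text \<open>If R is the largest distance to c on the window, the speed is at most M + L R there, so R
  exceeds the distance at any point of the window by at most (M + L R)/(2L).\<close>
lemma trajectory_window_growth:
  assumes \<eta>: "trajectory T \<eta>" and "M \<ge> 0"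
    and growth: "\<And>z v. v \<in> G z \<Longrightarrow> norm v \<le> M + L * norm (z - c)"
    and "0 \<le> p" "q \<le> T" "q - p \<le> 1 / (2 * L)" "r \<in> {p..q}" "s \<in> {p..q}"
  shows "norm (\<eta> s - c) \<le> 2 * norm (\<eta> r - c) + M / L"
proof -
  have "continuous_on {p..q} (\<lambda>t. norm (\<eta> t - c))"
    using abs_cont_on_imp_continuous_on[OF trajectory_abs_cont_on[OF \<eta> \<open>0 \<le> p\<close> \<open>q \<le> T\<close>]]
    by (intro continuous_intros)
  then obtain s0 where s0: "s0 \<in> {p..q}" "\<And>t. t \<in> {p..q} \<Longrightarrow> norm (\<eta> t - c) \<le> norm (\<eta> s0 - c)"
    using continuous_attains_sup[OF compact_Icc] \<open>r \<in> {p..q}\<close> by (metis empty_iff)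
  define R where "R = norm (\<eta> s0 - c)"
  have "0 \<le> M + L * R" using \<open>M \<ge> 0\<close> L_pos by (simp add: R_def)
  have "norm (\<eta> s0 - \<eta> r) \<le> (M + L * R) * \<bar>s0 - r\<bar>"
  proof (cases "r \<le> s0")
    case True
    then show ?thesis
      using trajectory_norm_diff_le[OF \<eta> _ True _ growth, of R] s0 \<open>0 \<le> M + L * R\<close>
        \<open>r \<in> {p..q}\<close> \<open>0 \<le> p\<close> \<open>q \<le> T\<close>
      by (auto simp: R_def)
  next
    case False
    then show ?thesis
      using trajectory_norm_diff_le[OF \<eta> _ _ _ growth, of s0 r R] s0 \<open>0 \<le> M + L * R\<close>
        \<open>r \<in> {p..q}\<close> \<open>0 \<le> p\<close> \<open>q \<le> T\<close>
      by (auto simp: R_def norm_minus_commute)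
  qed
  also have "\<dots> \<le> (M + L * R) * (1 / (2 * L))"
    using s0(1) \<open>r \<in> {p..q}\<close> \<open>q - p \<le> 1 / (2 * L)\<close> \<open>0 \<le> M + L * R\<close> by (intro mult_left_mono) auto
  also have "\<dots> = M / (2 * L) + R / 2" using L_pos by (simp add: field_simps)
  finally have "R \<le> 2 * norm (\<eta> r - c) + M / L"
    using norm_triangle_ineq[of "\<eta> r - c" "\<eta> s0 - \<eta> r"] by (simp add: R_def)
  then show ?thesis using s0(2)[OF \<open>s \<in> {p..q}\<close>] by (simp add: R_def)
qed

lemma trajectory_growth_bound:
  assumes "T > 0"
  obtains B where "\<And>\<eta> s t. trajectory T \<eta> \<Longrightarrow> s \<in> {0..T} \<Longrightarrow> t \<in> {0..T} \<Longrightarrow>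
    norm (\<eta> s - c) \<le> B * (norm (\<eta> t - c) + 1)"
proof -
  obtain M where "M \<ge> 0" and growth: "\<And>z v. v \<in> G z \<Longrightarrow> norm v \<le> M + L * norm (z - c)"
    using norm_le_linear_growth by blast
  define K where "K = M / L"
  have "K \<ge> 0" using \<open>M \<ge> 0\<close> L_pos by (simp add: K_def)
  obtain m :: nat where "m > 0" "T / m < 1 / (2 * L)"
    using exists_fine_mesh[OF \<open>T > 0\<close>, of "1 / (2 * L)"] L_pos by auto
  define h where "h = T / m"
  have "h > 0" "real m * h = T" "h \<le> 1 / (2 * L)"
    using \<open>m > 0\<close> \<open>T > 0\<close> \<open>T / m < 1 / (2 * L)\<close> by (auto simp: h_def)
  have doubling: "\<forall>s\<in>{0..T}. \<bar>s - t\<bar> \<le> real k * h \<longrightarrow> norm (\<eta> s - c) + K \<le> 2 ^ k * (norm (\<eta> t - c) + K)"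
    if \<eta>: "trajectory T \<eta>" and "t \<in> {0..T}" for \<eta> t k
  proof (induction k)
    case 0
    then show ?case by simp
  next
    case (Suc k)
    show ?case
    proof (intro ballI impI)
      fix s assume s: "s \<in> {0..T}" "\<bar>s - t\<bar> \<le> real (Suc k) * h"
      define s' where "s' = (if t \<le> s then max t (s - h) else min t (s + h))"
      have "\<bar>s' - t\<bar> \<le> real k * h" "\<bar>s - s'\<bar> \<le> h" "s' \<in> {0..T}"
        using s \<open>t \<in> {0..T}\<close> \<open>h > 0\<close> mult_nonneg_nonneg[of h "real k"]
        by (auto simp: s'_def algebra_simps min_def max_def)
      then have "norm (\<eta> s - c) \<le> 2 * norm (\<eta> s' - c) + K"
        using s \<open>h \<le> 1 / (2 * L)\<close> unfolding K_def
        by (intro trajectory_window_growth[OF \<eta> \<open>M \<ge> 0\<close> growth, of "min s s'" "max s s'"]) auto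
      moreover have "norm (\<eta> s' - c) + K \<le> 2 ^ k * (norm (\<eta> t - c) + K)"
        using Suc.IH \<open>\<bar>s' - t\<bar> \<le> real k * h\<close> \<open>s' \<in> {0..T}\<close> by blast
      ultimately show "norm (\<eta> s - c) + K \<le> 2 ^ Suc k * (norm (\<eta> t - c) + K)"
        using \<open>K \<ge> 0\<close> by simp
    qed
  qed
  have "norm (\<eta> s - c) \<le> 2 ^ m * (1 + K) * (norm (\<eta> t - c) + 1)"
    if "trajectory T \<eta>" "s \<in> {0..T}" "t \<in> {0..T}" for \<eta> s t
  proof -
    have "norm (\<eta> s - c) + K \<le> 2 ^ m * (norm (\<eta> t - c) + K)"
      using doubling[OF that(1,3), of m] that(2,3) \<open>real m * h = T\<close> by auto
    also have "\<dots> \<le> 2 ^ m * ((1 + K) * (norm (\<eta> t - c) + 1))"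
      using \<open>K \<ge> 0\<close> by (intro mult_left_mono) (auto simp: algebra_simps)
    finally show ?thesis using \<open>K \<ge> 0\<close> by (simp add: mult.assoc)
  qed
  then show thesis using that by blast
qed

end

section \<open>The value functions\<close>

lemma cInf_le_cInf_add:
  fixes A B :: "real set"
  assumes "A \<noteq> {}" "bdd_below B" "\<And>a. a \<in> A \<Longrightarrow> \<exists>b\<in>B. b \<le> a + c"
  shows "Inf B \<le> Inf A + c"
proof -
  have "Inf B - c \<le> a" if "a \<in> A" for a
    using assms(3)[OF that] cInf_lower[OF _ assms(2)] by force
  then have "Inf B - c \<le> Inf A" by (rule cInf_greatest[OF assms(1)])
  then show ?thesis by simp
qed

lemma cSUP_eq_cSUP_of_between:
  fixes f h :: "'a \<Rightarrow> real"
  assumes "\<And>x. x \<in> S \<Longrightarrow> f x \<le> h x" "\<And>x. x \<in> S \<Longrightarrow> h x \<le> (SUP x\<in>S. f x)"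
  shows "(SUP x\<in>S. h x) = (SUP x\<in>S. f x)"
proof (cases "S = {}")
  case False
  have "bdd_above (h ` S)" using assms(2) by (auto simp: bdd_above_def)
  have "(SUP x\<in>S. h x) \<le> (SUP x\<in>S. f x)"
    by (rule cSUP_least[OF False]) (use assms(2) in auto)
  moreover have "(SUP x\<in>S. f x) \<le> (SUP x\<in>S. h x)"
    by (rule cSUP_mono[OF False \<open>bdd_above (h ` S)\<close>]) (use assms(1) in auto)
  ultimately show ?thesis by (rule antisym)
qed simp

context hausdorff_lipschitz
begin

lemma Sol_nonempty:
  assumes "T > 0" "Sol G T T y0 \<noteq> {}"
  shows "Sol G T T y \<noteq> {}"
proof -
  obtain \<eta> where "trajectory T \<eta>" using assms(2) by (auto simp: Sol_iff)
  then obtain \<zeta> where "trajectory T \<zeta>" "\<zeta> T = y"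
    using filippov[OF assms(1) _ zero_less_one] by blast
  then show ?thesis by (auto simp: Sol_iff)
qed

lemma Sol_initial_bounded:
  assumes "T > 0"
  obtains R where "\<And>\<eta> y'. \<eta> \<in> Sol G T T y' \<Longrightarrow> dist y' y \<le> 1 \<Longrightarrow> \<eta> 0 \<in> cball y R"
proof -
  obtain B where B: "\<And>\<eta> s t. trajectory T \<eta> \<Longrightarrow> s \<in> {0..T} \<Longrightarrow> t \<in> {0..T} \<Longrightarrow>
      norm (\<eta> s - y) \<le> B * (norm (\<eta> t - y) + 1)"
    using trajectory_growth_bound[OF assms] by blast
  have "\<eta> 0 \<in> cball y (2 * \<bar>B\<bar>)" if "\<eta> \<in> Sol G T T y'" "dist y' y \<le> 1" for \<eta> y'
  proof -
    have "norm (\<eta> 0 - y) \<le> B * (norm (y' - y) + 1)"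
      using B[of \<eta> 0 T] that(1) assms by (auto simp: Sol_iff)
    also have "\<dots> \<le> \<bar>B\<bar> * (norm (y' - y) + 1)"
      by (rule mult_right_mono) auto
    also have "\<dots> \<le> \<bar>B\<bar> * 2"
      by (rule mult_left_mono) (use that(2) in \<open>auto simp: dist_norm\<close>)
    finally show ?thesis by (simp add: dist_norm norm_minus_commute mult.commute)
  qed
  then show thesis using that by blast
qed

lemma mayer_value_le_add:
  fixes g0 :: "'a \<Rightarrow> real"
  assumes "T > 0" "\<delta> > 0" "Sol G T T y1 \<noteq> {}" "bdd_below {g0 (\<eta> 0) | \<eta>. \<eta> \<in> Sol G T T y2}"
    and close: "\<And>\<eta> \<zeta>. \<eta> \<in> Sol G T T y1 \<Longrightarrow> \<zeta> \<in> Sol G T T y2 \<Longrightarrow>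
      norm (\<zeta> 0 - \<eta> 0) \<le> exp (2 * L * T) * (norm (y2 - y1) + \<delta>) \<Longrightarrow> g0 (\<zeta> 0) \<le> g0 (\<eta> 0) + c"
  shows "mayer_value G T g0 T y2 \<le> mayer_value G T g0 T y1 + c"
  unfolding mayer_value_def
proof (rule cInf_le_cInf_add[OF _ assms(4)])
  show "{g0 (\<eta> 0) | \<eta>. \<eta> \<in> Sol G T T y1} \<noteq> {}" using assms(3) by blast
  fix a assume "a \<in> {g0 (\<eta> 0) | \<eta>. \<eta> \<in> Sol G T T y1}"
  then obtain \<eta> where \<eta>: "\<eta> \<in> Sol G T T y1" "a = g0 (\<eta> 0)" by blast
  then obtain \<zeta> where "trajectory T \<zeta>" "\<zeta> T = y2"
    "norm (\<zeta> 0 - \<eta> 0) \<le> exp (2 * L * T) * (norm (y2 - y1) + \<delta>)"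
    using filippov[OF assms(1) _ assms(2)] by (auto simp: Sol_iff)
  then show "\<exists>b\<in>{g0 (\<eta> 0) | \<eta>. \<eta> \<in> Sol G T T y2}. b \<le> a + c"
    using close[OF \<eta>(1)] \<eta>(2) by (auto simp: Sol_iff)
qed

lemma mayer_value_locally_uniformly_continuous:
  fixes g0 :: "'a \<Rightarrow> real"
  assumes "T > 0" and g0: "continuous_on UNIV g0" and nonempty: "\<And>y. Sol G T T y \<noteq> {}" and "\<epsilon> > 0"
  obtains \<delta> where "\<delta> > 0" "\<And>y1 y2. dist y1 y \<le> 1 \<Longrightarrow> dist y2 y \<le> 1 \<Longrightarrow> dist y1 y2 < \<delta> \<Longrightarrow>
    mayer_value G T g0 T y2 \<le> mayer_value G T g0 T y1 + \<epsilon>"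
proof -
  obtain R where R: "\<And>\<eta> y'. \<eta> \<in> Sol G T T y' \<Longrightarrow> dist y' y \<le> 1 \<Longrightarrow> \<eta> 0 \<in> cball y R"
    using Sol_initial_bounded[OF \<open>T > 0\<close>] by blast
  have "uniformly_continuous_on (cball y R) g0"
    by (rule compact_uniformly_continuous[OF continuous_on_subset[OF g0] compact_cball]) simp
  then obtain d where "d > 0" and d: "\<And>p q. p \<in> cball y R \<Longrightarrow> q \<in> cball y R \<Longrightarrow>
      dist p q < d \<Longrightarrow> dist (g0 p) (g0 q) < \<epsilon>"
    using \<open>\<epsilon> > 0\<close> unfolding uniformly_continuous_on_def by metis
  define \<delta> where "\<delta> = d / (2 * exp (2 * L * T))"
  have "\<delta> > 0" "exp (2 * L * T) * (2 * \<delta>) = d" using \<open>d > 0\<close> by (auto simp: \<delta>_def)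
  have "compact (g0 ` cball y R)"
    by (rule compact_continuous_image[OF continuous_on_subset[OF g0] compact_cball]) simp
  then have "bdd_below (g0 ` cball y R)" by (intro bounded_imp_bdd_below compact_imp_bounded)
  then have bdd: "bdd_below {g0 (\<eta> 0) | \<eta>. \<eta> \<in> Sol G T T y'}" if "dist y' y \<le> 1" for y'
    by (rule bdd_below_mono) (use R that in blast)
  have "mayer_value G T g0 T y2 \<le> mayer_value G T g0 T y1 + \<epsilon>"
    if "dist y1 y \<le> 1" "dist y2 y \<le> 1" "dist y1 y2 < \<delta>" for y1 y2
  proof (rule mayer_value_le_add[OF \<open>T > 0\<close> \<open>\<delta> > 0\<close> nonempty bdd[OF that(2)]])
    fix \<eta> \<zeta> assume \<eta>: "\<eta> \<in> Sol G T T y1" and \<zeta>: "\<zeta> \<in> Sol G T T y2"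
      and close: "norm (\<zeta> 0 - \<eta> 0) \<le> exp (2 * L * T) * (norm (y2 - y1) + \<delta>)"
    have "exp (2 * L * T) * (norm (y2 - y1) + \<delta>) < exp (2 * L * T) * (2 * \<delta>)"
      using that(3) by (simp add: dist_norm norm_minus_commute)
    then have "dist (\<zeta> 0) (\<eta> 0) < d"
      using close \<open>exp (2 * L * T) * (2 * \<delta>) = d\<close> by (simp add: dist_norm)
    then show "g0 (\<zeta> 0) \<le> g0 (\<eta> 0) + \<epsilon>"
      using d[OF R[OF \<zeta> that(2)] R[OF \<eta> that(1)]] by (auto simp: dist_real_def abs_if split: if_splits)
  qed
  then show thesis using that \<open>\<delta> > 0\<close> by blast
qed

lemma continuous_on_mayer_value:
  fixes g0 :: "'a \<Rightarrow> real"
  assumes "T > 0" and g0: "continuous_on UNIV g0"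
  shows "continuous_on UNIV (mayer_value G T g0 T)"
proof (cases "\<exists>y0. Sol G T T y0 \<noteq> {}")
  case False
  then have "mayer_value G T g0 T = (\<lambda>_. Inf {})" by (auto simp: mayer_value_def fun_eq_iff)
  then show ?thesis by simp
next
  case True
  then have nonempty: "Sol G T T y \<noteq> {}" for y using Sol_nonempty[OF \<open>T > 0\<close>] by blast
  show ?thesis
    unfolding continuous_on_iff
  proof (intro ballI allI impI)
    fix y and \<epsilon> :: real assume "\<epsilon> > 0"
    then obtain \<delta> where "\<delta> > 0" and le: "\<And>y1 y2. dist y1 y \<le> 1 \<Longrightarrow> dist y2 y \<le> 1 \<Longrightarrow> dist y1 y2 < \<delta> \<Longrightarrow>
        mayer_value G T g0 T y2 \<le> mayer_value G T g0 T y1 + \<epsilon> / 2"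
      using mayer_value_locally_uniformly_continuous[OF \<open>T > 0\<close> g0 nonempty, of "\<epsilon> / 2"] by auto
    have "dist (mayer_value G T g0 T y') (mayer_value G T g0 T y) < \<epsilon>" if "dist y' y < min 1 \<delta>" for y'
      using le[of y' y] le[of y y'] that \<open>\<epsilon> > 0\<close> by (auto simp: dist_real_def dist_commute)
    then show "\<exists>d>0. \<forall>y'\<in>UNIV. dist y' y < d \<longrightarrow> dist (mayer_value G T g0 T y') (mayer_value G T g0 T y) < \<epsilon>"
      using \<open>\<delta> > 0\<close> by (intro exI[of _ "min 1 \<delta>"]) auto
  qed
qed

lemma bdd_above_terminal_values:
  fixes g :: "'a \<Rightarrow> real"
  assumes "T > 0" "continuous_on UNIV g"
  shows "bdd_above {g (\<xi> T) | \<xi>. \<xi> \<in> Sol G T 0 x}"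
proof -
  obtain B where B: "\<And>\<eta> s t. trajectory T \<eta> \<Longrightarrow> s \<in> {0..T} \<Longrightarrow> t \<in> {0..T} \<Longrightarrow>
      norm (\<eta> s - x) \<le> B * (norm (\<eta> t - x) + 1)"
    using trajectory_growth_bound[OF assms(1)] by blast
  have "\<xi> T \<in> cball x B" if "\<xi> \<in> Sol G T 0 x" for \<xi>
    using B[of \<xi> T 0] that assms(1) by (auto simp: Sol_iff dist_norm norm_minus_commute)
  then have "{g (\<xi> T) | \<xi>. \<xi> \<in> Sol G T 0 x} \<subseteq> g ` cball x B" by blast
  moreover have "compact (g ` cball x B)"
    by (rule compact_continuous_image[OF continuous_on_subset[OF assms(2)] compact_cball]) simp
  then have "bdd_above (g ` cball x B)" by (intro bounded_imp_bdd_above compact_imp_bounded)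
  ultimately show ?thesis by (rule bdd_above_mono[rotated])
qed

lemma inv_mayer_value_mayer_value:
  fixes g :: "'a \<Rightarrow> real"
  assumes "T > 0" "continuous_on UNIV g" and g0: "g0 = inv_mayer_value G T g 0"
  shows "inv_mayer_value G T (mayer_value G T g0 T) 0 = g0"
proof
  fix x
  let ?U = "mayer_value G T g0 T"
  have between: "g (\<xi> T) \<le> ?U (\<xi> T) \<and> ?U (\<xi> T) \<le> g0 x" if \<xi>: "\<xi> \<in> Sol G T 0 x" for \<xi>
  proof -
    have "g (\<xi> T) \<le> g0 (\<eta> 0)" if "\<eta> \<in> Sol G T T (\<xi> T)" for \<eta>
    proof -
      have "\<eta> \<in> Sol G T 0 (\<eta> 0)" using that by (simp add: Sol_iff)
      then have "g (\<eta> T) \<le> inv_mayer_value G T g 0 (\<eta> 0)"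
        unfolding inv_mayer_value_def
        by (intro cSup_upper bdd_above_terminal_values[OF assms(1,2)]) blast
      then show ?thesis using that g0 by (simp add: Sol_iff)
    qed
    moreover have "\<xi> \<in> Sol G T T (\<xi> T)" "\<xi> 0 = x" using \<xi> by (simp_all add: Sol_iff)
    ultimately show ?thesis
      unfolding mayer_value_def
      by (intro conjI cInf_greatest cInf_lower) (auto simp: bdd_below_def)
  qed
  have "(SUP \<xi>\<in>Sol G T 0 x. ?U (\<xi> T)) = (SUP \<xi>\<in>Sol G T 0 x. g (\<xi> T))"
  proof (rule cSUP_eq_cSUP_of_between)
    show "g (\<xi> T) \<le> ?U (\<xi> T)" "?U (\<xi> T) \<le> (SUP \<xi>\<in>Sol G T 0 x. g (\<xi> T))"
      if "\<xi> \<in> Sol G T 0 x" for \<xi>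
      using between[OF that] g0 by (auto simp: inv_mayer_value_def Setcompr_eq_image)
  qed
  then show "inv_mayer_value G T ?U 0 x = g0 x"
    using g0 by (simp add: inv_mayer_value_def Setcompr_eq_image)
qed

end

theorem corollary5p3:
  fixes G :: "'a::euclidean_space \<Rightarrow> 'a set" and T :: real and g0 :: "'a \<Rightarrow> real"
  assumes "T > 0"
    and "\<exists>L. \<forall>x y. hausdist (G x) (G y) \<le> L * dist x y"
    and "\<And>x. G x \<noteq> {}" and "\<And>x. convex (G x)" and "\<And>x. compact (G x)"
    and "continuous_on UNIV g0"
  shows "reconstructible G T g0 \<longleftrightarrow>
         (\<exists>g::'a \<Rightarrow> real. continuous_on UNIV g \<and> g0 = inv_mayer_value G T g 0)"
proof -
  obtain L where L: "\<And>x y. hausdist (G x) (G y) \<le> L * dist x y" using assms(2) by blast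
  interpret hausdorff_lipschitz G "max L 1"
  proof
    show "hausdist (G x) (G y) \<le> max L 1 * dist x y" for x y
      using L[of x y] mult_right_mono[of L "max L 1" "dist x y"] by simp
  qed (use assms(3-5) in auto)
  show ?thesis
  proof
    assume "reconstructible G T g0"
    then show "\<exists>g. continuous_on UNIV g \<and> g0 = inv_mayer_value G T g 0"
      using continuous_on_mayer_value[OF assms(1,6)] unfolding reconstructible_def by blast
  next
    assume "\<exists>g. continuous_on UNIV g \<and> g0 = inv_mayer_value G T g 0"
    then show "reconstructible G T g0"
      using inv_mayer_value_mayer_value[OF assms(1)] unfolding reconstructible_def by auto
  qed
qed

end
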